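(* Let $G$ be an arithmetic semigroup satisfying $N_G(x)=Ax+\mathcal{O}\!\left(\frac{x}{\log^\gamma x}\right)$ with $\frac32<\gamma\le2$ and $A\in\mathbb{R}$, and let $\zeta=\zeta_G$. Then for real $t\ge2$, $$|\zeta(1+\mathrm{i}t)|\gg t^{-\frac{8}{(\gamma-\frac32)^2}}.$$
   Context: An arithmetic semigroup is a commutative semigroup $(G,\cdot)$ with identity together with a multiplicative norm $\|\cdot\|\colon G\to[1,\infty)$ such that $N_G(x)=|\{g\in G:\|g\|\le x\}|$ is finite for every $x$, the identity is the unique element of norm $1$, and decomposition into irreducible elements is unique. Its zeta function is $\zeta_G(s)=\sum_{g\in G}\|g\|^{-s}$ for $\Re s>1$; for $t\neq0$ the value $\zeta_G(1+\mathrm{i}t)$ denotes the boundary value $\lim_{\sigma\to1^+}\zeta_G(\sigma+\mathrm{i}t)$ (which exists under the hypothesis). *)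

theory Defs
  imports "HOL-Analysis.Analysis" "HOL-Library.Multiset" "HOL-Library.Landau_Symbols"
begin

text \<open>An arithmetic semigroup is modelled as a type of class comm_monoid_mult
  (the whole type is the semigroup G) together with a norm function.\<close>

definition as_irreducible :: "'a::comm_monoid_mult \<Rightarrow> bool" where
  "as_irreducible p \<longleftrightarrow> p \<noteq> 1 \<and> (\<forall>a b. p = a * b \<longrightarrow> a = 1 \<or> b = 1)"

definition arith_semigroup :: "('a::comm_monoid_mult \<Rightarrow> real) \<Rightarrow> bool" where
  "arith_semigroup nrm \<longleftrightarrow>
     (\<forall>g. nrm g \<ge> 1) \<and>
     (\<forall>a b. nrm (a * b) = nrm a * nrm b) \<and>
     (\<forall>g. nrm g = 1 \<longleftrightarrow> g = 1) \<and>
     (\<forall>x. finite {g. nrm g \<le> x}) \<and>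
     (\<forall>g. \<exists>!M::'a multiset. (\<forall>p\<in>#M. as_irreducible p) \<and> prod_mset M = g)"

definition count_N :: "('a \<Rightarrow> real) \<Rightarrow> real \<Rightarrow> real" where
  "count_N nrm x = real (card {g. nrm g \<le> x})"

definition zeta_G :: "('a \<Rightarrow> real) \<Rightarrow> complex \<Rightarrow> complex" where
  "zeta_G nrm s = infsum (\<lambda>g. (complex_of_real (nrm g)) powr (- s)) UNIV"

definition zeta_G_boundary :: "('a \<Rightarrow> real) \<Rightarrow> real \<Rightarrow> complex" where
  "zeta_G_boundary nrm t = Lim (at_right 1) (\<lambda>\<sigma>. zeta_G nrm (Complex \<sigma> t))"

end

theory Submission
  imports Defs
begin

text \<open>Partial summation writes \<open>\<zeta>(s) = A s / (s - 1) + s H(s)\<close> for \<open>Re s > 1\<close>, where \<open>H\<close> is the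
  Mellin transform of the remainder \<open>R(x) = N(x) - A x\<close>. The bound on \<open>R\<close> makes \<open>H\<close> bounded and
  \<open>\<theta>\<close>-Hoelder in the real direction for \<open>\<theta> < \<gamma> - 1\<close>, so \<open>\<zeta>(\<sigma> + i t)\<close> converges as
  \<open>\<sigma> \<rightarrow> 1\<^sup>+\<close> with error \<open>O(t (\<sigma> - 1)\<^sup>\<theta>)\<close>. On the other hand the Euler product, together with the
  positivity of \<open>\<Sum>\<^sub>j r\<^sup>j / j \<bar>\<Sum>\<^sub>l u\<^sub>l\<^sup>j\<bar>\<^sup>2\<close>, gives
  \<open>\<Prod>\<^sub>l\<^sub>,\<^sub>l\<^sub>' \<^sub>< \<^sub>n \<bar>\<zeta>(\<sigma> + i (l - l') t)\<bar> \<ge> 1\<close>; bounding every factor except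
  \<open>\<zeta>(\<sigma> \<plusminus> i t)\<close> yields a lower bound for \<open>\<bar>\<zeta>(1 + \<delta> + i t)\<bar>\<close> that beats the Hoelder error
  for \<open>\<delta>\<close> a suitable power of \<open>t\<close>. The exponent \<open>8 / (\<gamma> - 3/2)\<^sup>2\<close> comes from
  \<open>\<theta> = (\<gamma> - 1/2) / 2\<close> and \<open>n \<approx> 2 / (\<gamma> - 3/2)\<close>.\<close>

definition cpow_neg :: "complex \<Rightarrow> real \<Rightarrow> complex" where
  "cpow_neg s x = exp (- s * of_real (ln x))"

lemma cpow_neg_eq_powr: "x > 0 \<Longrightarrow> complex_of_real x powr (- s) = cpow_neg s x"
  by (simp add: powr_def cpow_neg_def Ln_of_real)

lemma norm_cpow_neg: "x > 0 \<Longrightarrow> norm (cpow_neg s x) = x powr (- Re s)"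
  by (simp add: cpow_neg_def powr_def)

lemma norm_cpow_neg_le: "x \<ge> 1 \<Longrightarrow> Re s \<ge> a \<Longrightarrow> norm (cpow_neg s x) \<le> x powr (- a)"
  by (simp add: norm_cpow_neg powr_mono)

lemma cpow_neg_1 [simp]: "cpow_neg s 1 = 1"
  by (simp add: cpow_neg_def)

lemma cpow_neg_mult: "x > 0 \<Longrightarrow> y > 0 \<Longrightarrow> cpow_neg s (x * y) = cpow_neg s x * cpow_neg s y"
  unfolding cpow_neg_def by (simp add: ln_mult algebra_simps flip: exp_add)

lemma cpow_neg_power: "x > 0 \<Longrightarrow> cpow_neg s (x ^ k) = cpow_neg s x ^ k"
  by (simp add: cpow_neg_def ln_realpow exp_of_nat_mult[symmetric] mult_ac)

lemma cpow_neg_add: "cpow_neg (a + b) x = cpow_neg a x * cpow_neg b x"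
  by (simp add: cpow_neg_def algebra_simps flip: exp_add)

lemma cpow_neg_cnj: "cpow_neg (cnj s) x = cnj (cpow_neg s x)"
  by (simp add: cpow_neg_def exp_cnj)

lemma cpow_neg_of_real: "x > 0 \<Longrightarrow> cpow_neg (of_real \<sigma>) x = of_real (x powr (- \<sigma>))"
  by (simp add: cpow_neg_def powr_def flip: exp_of_real)

lemma cpow_neg_Complex:
  assumes "x > 0"
  shows "cpow_neg (Complex \<sigma> \<tau>) x = of_real (x powr (- \<sigma>)) * cis (- \<tau> * ln x)"
proof -
  have "cpow_neg (Complex \<sigma> \<tau>) x = cpow_neg (of_real \<sigma>) x * cpow_neg (\<i> * of_real \<tau>) x"
    by (simp add: Complex_eq cpow_neg_add)
  also have "cpow_neg (\<i> * of_real \<tau>) x = cis (- \<tau> * ln x)"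
    by (simp add: cpow_neg_def cis_conv_exp mult_ac)
  finally show ?thesis
    using assms by (simp add: cpow_neg_of_real)
qed

lemma cpow_neg_Suc: "x > 0 \<Longrightarrow> cpow_neg (s + 1) x = cpow_neg s x / of_real x"
  by (simp add: cpow_neg_add cpow_neg_of_real[of x 1, simplified] powr_minus divide_inverse)

lemma cpow_neg_has_vector_derivative:
  assumes "x > 0"
  shows "(cpow_neg s has_vector_derivative (- s * cpow_neg (s + 1) x)) (at x within S)"
proof -
  have "((\<lambda>x. - s * of_real (ln x)) has_vector_derivative (- s * of_real (inverse x))) (at x within S)"
    using has_vector_derivative_of_real[OF DERIV_ln[OF assms]]
    by (intro has_vector_derivative_mult_right) (rule has_vector_derivative_at_within)
  from field_vector_diff_chain_within[OF this has_field_derivative_at_within[OF DERIV_exp]]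
  have "(cpow_neg s has_vector_derivative (- s * of_real (inverse x)) * cpow_neg s x) (at x within S)"
    by (simp add: o_def cpow_neg_def [abs_def])
  moreover have "(- s * of_real (inverse x)) * cpow_neg s x = - s * cpow_neg (s + 1) x"
    using assms by (simp add: cpow_neg_Suc divide_inverse mult_ac)
  ultimately show ?thesis by (simp only:)
qed

lemma cpow_neg_has_integral:
  assumes "c \<noteq> 0" "0 < a" "a \<le> b"
  shows "(cpow_neg (c + 1) has_integral (cpow_neg c a - cpow_neg c b) / c) {a..b}"
proof -
  have "((\<lambda>x. - cpow_neg c x / c) has_vector_derivative cpow_neg (c + 1) x) (at x within {a..b})"
    if "x \<in> {a..b}" for x
  proof -
    have "x > 0" using that assms by auto
    from has_vector_derivative_mult_right[OF cpow_neg_has_vector_derivative[OF this, of c "{a..b}"], of "- 1 / c"]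
    show ?thesis using assms(1) by simp
  qed
  from fundamental_theorem_of_calculus[OF assms(3) this]
  show ?thesis by (simp add: diff_divide_distrib add.commute)
qed

lemma cpow_neg_linear_has_integral:
  assumes "X \<ge> 1" "s \<noteq> 1"
  shows "((\<lambda>x. of_real (A * x) * cpow_neg (s + 1) x) has_integral
           of_real A * ((1 - cpow_neg (s - 1) X) / (s - 1))) {1..X}"
proof -
  have "(cpow_neg ((s - 1) + 1) has_integral (cpow_neg (s - 1) 1 - cpow_neg (s - 1) X) / (s - 1)) {1..X}"
    using assms by (intro cpow_neg_has_integral) auto
  then have "((\<lambda>x. of_real A * cpow_neg s x) has_integral
               of_real A * ((1 - cpow_neg (s - 1) X) / (s - 1))) {1..X}"
    by (intro has_integral_mult_right) simp
  then show ?thesis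
    by (rule has_integral_eq[rotated]) (auto simp: cpow_neg_Suc)
qed

lemma le_powr_of_le_1:
  fixes d \<theta> :: real
  assumes "0 \<le> d" "d \<le> 1" "0 < \<theta>" "\<theta> \<le> 1"
  shows "d \<le> d powr \<theta>"
  using assms powr_mono'[of \<theta> 1 d] by (cases "d = 0") auto

lemma one_minus_exp_neg_le_powr:
  fixes y \<theta> :: real
  assumes "y \<ge> 0" "0 < \<theta>" "\<theta> \<le> 1"
  shows "1 - exp (- y) \<le> y powr \<theta>"
proof (cases "y \<le> 1")
  case True
  have "1 - exp (- y) \<le> y" using exp_ge_add_one_self[of "- y"] by linarith
  also have "y \<le> y powr \<theta>"
    using True assms by (intro le_powr_of_le_1) auto
  finally show ?thesis .
next
  case False
  have "exp (- y) > 0" by simp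
  then show ?thesis using assms False ge_one_powr_ge_zero[of y \<theta>] by linarith
qed

lemma norm_pole_shift_diff_le:
  fixes s :: complex
  assumes "\<bar>Im s\<bar> \<ge> 1" "d \<ge> 0"
  shows "norm (- of_real d / ((s + of_real d - 1) * (s - 1))) \<le> d"
proof -
  have "1 \<le> norm (s + of_real d - 1)" "1 \<le> norm (s - 1)"
    using assms abs_Im_le_cmod[of "s + of_real d - 1"] abs_Im_le_cmod[of "s - 1"] by auto
  then have "1 * 1 \<le> norm (s + of_real d - 1) * norm (s - 1)"
    by (intro mult_mono) auto
  then have "d / (norm (s + of_real d - 1) * norm (s - 1)) \<le> d / 1"
    using assms by (intro divide_left_mono) auto
  then show ?thesis
    using assms by (simp add: norm_mult norm_divide)
qed

text \<open>Taking logarithms, the product becomes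
  \<open>-\<Sum>\<^sub>j r\<^sup>j / j * \<bar>\<Sum>\<^sub>l u\<^sub>l\<^sup>j\<bar>\<^sup>2 \<le> 0\<close>:
  the generalisation of the classical \<open>3 + 4 cos \<phi> + cos 2\<phi> \<ge> 0\<close>.\<close>
lemma prod_norm_one_minus_rotations_le_1:
  fixes r :: real and u :: "nat \<Rightarrow> complex"
  assumes r: "0 \<le> r" "r < 1" and u: "\<And>l. norm (u l) = 1"
  shows "(\<Prod>l<n. \<Prod>l'<n. norm (1 - of_real r * u l * cnj (u l'))) \<le> 1"
proof -
  define w where "w l l' = of_real r * u l * cnj (u l')" for l l'
  have norm_w: "norm (w l l') = r" for l l' using r u by (simp add: w_def norm_mult)
  have nonzero: "1 - w l l' \<noteq> 0" for l l' using norm_w[of l l'] r by auto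
  have log_series: "(\<lambda>j. - ((w l l') ^ j) / of_nat j) sums Ln (1 - w l l')" for l l'
    using Ln_series'[of "- w l l'"] norm_w[of l l'] r by simp
  have sum_log_series: "(\<lambda>j. \<Sum>l<n. \<Sum>l'<n. - ((w l l') ^ j) / of_nat j)
      sums (\<Sum>l<n. \<Sum>l'<n. Ln (1 - w l l'))"
    by (intro sums_sum log_series)
  have series_term: "(\<Sum>l<n. \<Sum>l'<n. - ((w l l') ^ j) / of_nat j)
      = of_real (- (r ^ j / real j) * (norm (\<Sum>l<n. u l ^ j))\<^sup>2)" for j
  proof -
    have "(\<Sum>l<n. \<Sum>l'<n. - ((w l l') ^ j) / of_nat j)
        = - (of_real (r ^ j) / of_nat j) * ((\<Sum>l<n. u l ^ j) * cnj (\<Sum>l'<n. u l' ^ j))"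
      by (simp add: w_def power_mult_distrib sum_distrib_left sum_distrib_right cnj_sum
          sum_negf sum_divide_distrib mult_ac) (rule sum.swap)
    also have "(\<Sum>l<n. u l ^ j) * cnj (\<Sum>l'<n. u l' ^ j) = of_real ((norm (\<Sum>l<n. u l ^ j))\<^sup>2)"
      by (simp only: complex_norm_square cnj_sum complex_cnj_power)
    finally show ?thesis by simp
  qed
  have real_log_series: "(\<lambda>j. - (r ^ j / real j) * (norm (\<Sum>l<n. u l ^ j))\<^sup>2) sums
      (\<Sum>l<n. \<Sum>l'<n. ln (norm (1 - w l l')))"
  proof -
    have "(\<lambda>j. complex_of_real (- (r ^ j / real j) * (norm (\<Sum>l<n. u l ^ j))\<^sup>2)) sums
      (\<Sum>l<n. \<Sum>l'<n. Ln (1 - w l l'))" using sum_log_series by (simp only: series_term)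
    from sums_Re[OF this] show ?thesis using nonzero by (simp add: Re_sum)
  qed
  have sum_ln_le_0: "(\<Sum>l<n. \<Sum>l'<n. ln (norm (1 - w l l'))) \<le> 0"
    using r by (auto intro!: sums_le[OF _ real_log_series sums_zero] mult_nonneg_nonneg)
  have pos: "(\<Prod>l<n. \<Prod>l'<n. norm (1 - w l l')) > 0" using nonzero by (auto intro!: prod_pos)
  have "ln (\<Prod>l<n. \<Prod>l'<n. norm (1 - w l l')) = (\<Sum>l<n. \<Sum>l'<n. ln (norm (1 - w l l')))"
    using nonzero by (simp add: ln_prod prod_pos)
  then have "ln (\<Prod>l<n. \<Prod>l'<n. norm (1 - w l l')) \<le> 0" using sum_ln_le_0 by simp
  then have "(\<Prod>l<n. \<Prod>l'<n. norm (1 - w l l')) \<le> 1" using pos by simp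
  then show ?thesis by (simp add: w_def)
qed

lemma prod_inverse_norm_one_minus_rotations_ge_1:
  fixes r :: real and u :: "nat \<Rightarrow> complex"
  assumes r: "0 \<le> r" "r < 1" and u: "\<And>l. norm (u l) = 1"
  shows "(\<Prod>l<n. \<Prod>l'<n. 1 / norm (1 - of_real r * u l * cnj (u l'))) \<ge> 1"
proof -
  have "norm (of_real r * u l * cnj (u l')) < 1" for l l'
    using r u by (simp add: norm_mult)
  then have "1 - of_real r * u l * cnj (u l') \<noteq> 0" for l l'
    by (metis norm_one order_less_irrefl right_minus_eq)
  then have "norm (1 - of_real r * u l * cnj (u l')) > 0" for l l'
    by simp
  then have "(\<Prod>l<n. \<Prod>l'<n. norm (1 - of_real r * u l * cnj (u l'))) > 0"
    by (intro prod_pos) auto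
  with prod_norm_one_minus_rotations_le_1[OF r u, where n=n]
  show ?thesis by (simp add: prod_dividef)
qed

lemma holder_imp_uniformly_continuous_on:
  fixes f :: "real \<Rightarrow> 'b::real_normed_vector"
  assumes "C \<ge> 0" "\<theta> > 0"
    and holder: "\<And>x y. x \<in> S \<Longrightarrow> y \<in> S \<Longrightarrow> norm (f x - f y) \<le> C * \<bar>x - y\<bar> powr \<theta>"
  shows "uniformly_continuous_on S f"
  unfolding uniformly_continuous_on_def
proof (intro allI impI)
  fix e :: real assume "e > 0"
  define d where "d = (e / (C + 1)) powr (1 / \<theta>)"
  have "d > 0" using \<open>e > 0\<close> assms by (simp add: d_def)
  moreover have "dist (f y) (f x) < e" if "x \<in> S" "y \<in> S" "dist y x < d" for x y
  proof -
    have "\<bar>y - x\<bar> powr \<theta> < d powr \<theta>"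
      using that assms by (intro powr_less_mono2) (auto simp: dist_real_def)
    also have "d powr \<theta> = e / (C + 1)"
      using \<open>e > 0\<close> assms by (simp add: d_def powr_powr)
    finally have "(C + 1) * \<bar>y - x\<bar> powr \<theta> < e"
      using assms by (simp add: field_simps)
    moreover have "C * \<bar>y - x\<bar> powr \<theta> \<le> (C + 1) * \<bar>y - x\<bar> powr \<theta>"
      by (simp add: mult_right_mono)
    moreover have "norm (f y - f x) \<le> C * \<bar>y - x\<bar> powr \<theta>"
      using holder that by blast
    ultimately show ?thesis by (simp add: dist_norm)
  qed
  ultimately show "\<exists>d>0. \<forall>x\<in>S. \<forall>y\<in>S. dist y x < d \<longrightarrow> dist (f y) (f x) < e"
    by blast
qed

lemma holder_at_right_limit:
  fixes f :: "real \<Rightarrow> 'b::banach"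
  assumes "a < b" "C \<ge> 0" "\<theta> > 0"
    and holder: "\<And>x y. a < y \<Longrightarrow> y \<le> x \<Longrightarrow> x \<le> b \<Longrightarrow> norm (f x - f y) \<le> C * (x - y) powr \<theta>"
  obtains L where "(f \<longlongrightarrow> L) (at_right a)"
    and "\<And>x. a < x \<Longrightarrow> x \<le> b \<Longrightarrow> norm (f x - L) \<le> C * (x - a) powr \<theta>"
proof -
  have "norm (f x - f y) \<le> C * \<bar>x - y\<bar> powr \<theta>" if "x \<in> {a<..b}" "y \<in> {a<..b}" for x y
  proof (cases "y \<le> x")
    case True
    then show ?thesis using holder[of y x] that by simp
  next
    case False
    then show ?thesis using holder[of x y] that by (simp add: norm_minus_commute)
  qed
  then have "uniformly_continuous_on {a<..b} f"
    using assms by (intro holder_imp_uniformly_continuous_on)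
  from uniformly_continuous_on_extension_at_closure[OF this, of a]
  obtain L where "(f \<longlongrightarrow> L) (at a within {a<..b})"
    using \<open>a < b\<close> by auto
  then have lim: "(f \<longlongrightarrow> L) (at_right a)"
  proof (rule Lim_transform_within_set)
    show "\<forall>\<^sub>F x in at a. (x \<in> {a<..b}) = (x \<in> {a<..})"
      using order_tendstoD(2)[OF tendsto_ident_at \<open>a < b\<close>] by eventually_elim auto
  qed
  have "norm (f x - L) \<le> C * (x - a) powr \<theta>" if "a < x" "x \<le> b" for x
  proof (rule tendsto_upperbound)
    show "((\<lambda>y. norm (f x - f y)) \<longlongrightarrow> norm (f x - L)) (at_right a)"
      by (intro tendsto_intros lim)
    show "\<forall>\<^sub>F y in at_right a. norm (f x - f y) \<le> C * (x - a) powr \<theta>"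
      using eventually_at_right_real[OF \<open>a < x\<close>]
    proof eventually_elim
      case (elim y)
      then have "norm (f x - f y) \<le> C * (x - y) powr \<theta>" using holder that by auto
      also have "\<dots> \<le> C * (x - a) powr \<theta>"
        using elim assms by (intro mult_left_mono powr_mono2) auto
      finally show ?case .
    qed
  qed simp
  with lim that show ?thesis by blast
qed

lemma prod_band_pattern:
  fixes a b c :: real
  shows "(\<Prod>l<Suc m. \<Prod>l'<Suc m. if l = l' then a else if l = Suc l' \<or> l' = Suc l then b else c)
     = a ^ Suc m * b ^ (2 * m) * c ^ (m * (m - 1))"
proof (induction m)
  case (Suc m)
  define h where "h l l' = (if l = l' then a else if l = Suc l' \<or> l' = Suc l then b else c)" for l l' :: nat
  have last_column: "(\<Prod>l<Suc m. h l (Suc m)) = c ^ m * b"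
    and last_row: "(\<Prod>l'<Suc m. h (Suc m) l') = c ^ m * b"
    by (auto simp: h_def prod.lessThan_Suc intro!: prod.neutral_const prod.cong)
  have "(\<Prod>l<Suc (Suc m). \<Prod>l'<Suc (Suc m). h l l')
      = (\<Prod>l<Suc m. \<Prod>l'<Suc m. h l l') * (\<Prod>l<Suc m. h l (Suc m))
        * ((\<Prod>l'<Suc m. h (Suc m) l') * h (Suc m) (Suc m))"
    by (simp only: prod.lessThan_Suc[of _ "Suc m"] prod.distrib mult_ac)
  also have "\<dots> = a ^ Suc m * b ^ (2 * m) * c ^ (m * (m - 1)) * (c ^ m * b) * ((c ^ m * b) * a)"
    using Suc.IH by (simp only: last_column last_row) (simp add: h_def)
  also have "\<dots> = a ^ Suc (Suc m) * b ^ (2 * Suc m) * c ^ (m * (m - 1) + m + m)"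
    by (simp only: power_add power_Suc mult_2) (simp only: mult_ac)
  also have "m * (m - 1) + m + m = Suc m * (Suc m - 1)"
    by (cases m) auto
  finally show ?case by (simp add: h_def)
qed simp

lemma powr_lower_bound_of_prod_ge_1:
  fixes a b c :: real
  assumes m: "m \<ge> 1" and a: "a > 0" and c: "c > 0" and b: "b \<ge> 0"
    and prod: "1 \<le> a ^ Suc m * b ^ (2 * m) * c ^ (m * (m - 1))"
  shows "b \<ge> a powr (- (real (Suc m) / (2 * real m))) * c powr (- ((real m - 1) / 2))"
proof -
  have "b \<noteq> 0" using prod m by (cases "b = 0") (auto simp: zero_power)
  then have b_pos: "b > 0" using b by simp
  have "0 \<le> ln (a ^ Suc m * b ^ (2 * m) * c ^ (m * (m - 1)))" using prod by simp
  also have "\<dots> = real (Suc m) * ln a + 2 * real m * ln b + real m * (real m - 1) * ln c"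
    using a b_pos c m by (simp add: ln_mult ln_realpow of_nat_diff algebra_simps)
  finally have "- (real (Suc m) / (2 * real m)) * ln a - ((real m - 1) / 2) * ln c \<le> ln b"
    using m by (simp add: field_simps)
  then have "exp (- (real (Suc m) / (2 * real m)) * ln a - ((real m - 1) / 2) * ln c) \<le> b"
    using b_pos by (metis exp_le_cancel_iff exp_ln)
  also have "exp (- (real (Suc m) / (2 * real m)) * ln a - ((real m - 1) / 2) * ln c)
      = a powr (- (real (Suc m) / (2 * real m))) * c powr (- ((real m - 1) / 2))"
    using a c by (simp add: powr_def exp_diff exp_minus field_simps flip: exp_add)
  finally show ?thesis .
qed

definition pole_exponent :: "nat \<Rightarrow> real" where
  "pole_exponent n = real n / (2 * (real n - 1))"

definition growth_exponent :: "nat \<Rightarrow> real" where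
  "growth_exponent n = (real n - 2) / 2"

text \<open>The product inequality gives \<open>\<bar>\<zeta>(1 + \<delta> + i t)\<bar> \<ge> c \<delta>\<^sup>\<alpha> t\<^sup>-\<^sup>\<beta>\<close> with \<open>\<alpha>\<close> the pole exponent and
  \<open>\<beta>\<close> the growth exponent, while \<open>\<zeta>(1 + \<delta> + i t)\<close> is within \<open>O(t \<delta>\<^sup>\<theta>)\<close> of \<open>\<zeta>(1 + i t)\<close>.
  Taking \<open>\<delta>\<close> a small multiple of \<open>t\<close> to the power \<open>-(\<beta> + 1) / (\<theta> - \<alpha>)\<close> leaves this exponent.\<close>
definition boundary_exponent :: "nat \<Rightarrow> real \<Rightarrow> real" where
  "boundary_exponent n \<theta> = growth_exponent n
     + pole_exponent n * (growth_exponent n + 1) / (\<theta> - pole_exponent n)"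

lemma boundary_exponent_le:
  fixes \<epsilon> :: real
  assumes \<epsilon>: "0 < \<epsilon>" "\<epsilon> \<le> 1/2"
  obtains n where "n \<ge> 2" "pole_exponent n < 1/2 + \<epsilon>/2"
    and "boundary_exponent n (1/2 + \<epsilon>/2) \<le> 8 / \<epsilon>\<^sup>2"
proof
  define u where "u = 1 / \<epsilon>"
  define n where "n = nat \<lceil>2 * u\<rceil> + 1"
  have u: "u \<ge> 2" using \<epsilon> by (simp add: u_def field_simps)
  have n: "2 * u \<le> real n - 1" "real n - 1 \<le> 2 * u + 1"
    using u by (simp_all add: n_def of_nat_nat)
  then show "n \<ge> 2" using u by linarith
  define \<alpha> where "\<alpha> = pole_exponent n"
  have "\<alpha> = 1/2 + 1 / (2 * (real n - 1))"
    using n u by (simp add: \<alpha>_def pole_exponent_def field_simps)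
  also have "1 / (2 * (real n - 1)) \<le> 1 / (4 * u)"
    using n u by (intro divide_left_mono) auto
  also have "1 / (4 * u) = \<epsilon> / 4"
    using \<epsilon> by (simp add: u_def)
  finally have \<alpha>: "\<alpha> \<le> 1/2 + \<epsilon>/4" by simp
  then show "pole_exponent n < 1/2 + \<epsilon>/2"
    using \<epsilon> by (simp add: \<alpha>_def)
  have "\<alpha> * (real n / 2) / (1/2 + \<epsilon>/2 - \<alpha>) \<le> (3/4) * (real n / 2) / (\<epsilon> / 4)"
    using \<alpha> \<epsilon> n u by (intro frac_le mult_mono) (auto simp: \<alpha>_def pole_exponent_def)
  also have "\<dots> \<le> 3 * (u + 1) * u"
    using \<epsilon> n u by (simp add: u_def field_simps)
  finally have "\<alpha> * (real n / 2) / (1/2 + \<epsilon>/2 - \<alpha>) \<le> 3 * (u + 1) * u" .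
  moreover have "boundary_exponent n (1/2 + \<epsilon>/2)
      = (real n - 2) / 2 + \<alpha> * (real n / 2) / (1/2 + \<epsilon>/2 - \<alpha>)"
  proof -
    have "(real n - 2) / 2 + 1 = real n / 2" by (simp add: field_simps)
    then show ?thesis by (simp only: boundary_exponent_def growth_exponent_def \<alpha>_def)
  qed
  moreover have "(real n - 2) / 2 \<le> u" using n by simp
  ultimately have "boundary_exponent n (1/2 + \<epsilon>/2) \<le> u + 3 * (u + 1) * u"
    by linarith
  also have "\<dots> \<le> 8 * u\<^sup>2"
    using u by (simp add: power2_eq_square algebra_simps)
  also have "8 * u\<^sup>2 = 8 / \<epsilon>\<^sup>2"
    by (simp add: u_def power_divide)
  finally show "boundary_exponent n (1/2 + \<epsilon>/2) \<le> 8 / \<epsilon>\<^sup>2" .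
qed

locale arithmetic_semigroup =
  fixes nrm :: "'a::comm_monoid_mult \<Rightarrow> real"
  assumes arith_semigroup: "arith_semigroup nrm"
begin

lemma nrm_ge_1: "nrm g \<ge> 1"
  using arith_semigroup by (auto simp: arith_semigroup_def)

lemma nrm_pos: "nrm g > 0"
  using nrm_ge_1[of g] by linarith

lemma nrm_mult: "nrm (a * b) = nrm a * nrm b"
  using arith_semigroup by (auto simp: arith_semigroup_def)

lemma nrm_eq_1_iff: "nrm g = 1 \<longleftrightarrow> g = 1"
  using arith_semigroup by (auto simp: arith_semigroup_def)

lemma finite_nrm_le: "finite {g. nrm g \<le> x}"
  using arith_semigroup by (auto simp: arith_semigroup_def)

lemma unique_factorization: "\<exists>!M :: 'a multiset. (\<forall>p\<in>#M. as_irreducible p) \<and> prod_mset M = g"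
  using arith_semigroup by (auto simp: arith_semigroup_def)

lemma nrm_1 [simp]: "nrm 1 = 1"
  using nrm_eq_1_iff by simp

lemma nrm_irreducible_gt_1: "as_irreducible p \<Longrightarrow> nrm p > 1"
  using nrm_ge_1[of p] nrm_eq_1_iff[of p] by (auto simp: as_irreducible_def)

lemma nrm_power: "nrm (p ^ k) = nrm p ^ k"
  by (induction k) (auto simp: nrm_mult)

lemma nrm_prod: "nrm (\<Prod>x\<in>P. f x) = (\<Prod>x\<in>P. nrm (f x))"
  by (induction P rule: infinite_finite_induct) (auto simp: nrm_mult)

definition factorization :: "'a \<Rightarrow> 'a multiset" where
  "factorization g = (THE M. (\<forall>p\<in>#M. as_irreducible p) \<and> prod_mset M = g)"

lemma factorization: "(\<forall>p\<in>#factorization g. as_irreducible p) \<and> prod_mset (factorization g) = g"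
  unfolding factorization_def by (rule theI'[OF unique_factorization])

lemma factorization_prod_mset: "\<forall>p\<in>#M. as_irreducible p \<Longrightarrow> factorization (prod_mset M) = M"
  unfolding factorization_def by (rule the1_equality[OF unique_factorization]) auto

lemma nrm_le_of_in_factorization:
  assumes "p \<in># factorization g"
  shows "nrm p \<le> nrm g"
proof -
  have "g = prod_mset (add_mset p (factorization g - {#p#}))"
    using assms factorization[of g] by simp
  then have "nrm g = nrm p * nrm (prod_mset (factorization g - {#p#}))"
    by (metis nrm_mult prod_mset.add_mset)
  then show ?thesis
    using nrm_ge_1 nrm_pos[of p] by (simp add: mult_le_cancel_left1)
qed

subsection \<open>Euler product over finitely many irreducibles\<close>

definition supported_on :: "'a set \<Rightarrow> 'a set" where
  "supported_on P = {g. set_mset (factorization g) \<subseteq> P}"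

definition prod_powers :: "'a set \<Rightarrow> ('a \<Rightarrow> nat) \<Rightarrow> 'a" where
  "prod_powers P e = (\<Prod>p\<in>P. p ^ e p)"

definition mset_powers :: "'a set \<Rightarrow> ('a \<Rightarrow> nat) \<Rightarrow> 'a multiset" where
  "mset_powers P e = (\<Sum>p\<in>P. replicate_mset (e p) p)"

lemma prod_powers_eq_prod_mset: "prod_powers P e = prod_mset (mset_powers P e)"
  unfolding prod_powers_def mset_powers_def
  by (induction P rule: infinite_finite_induct) auto

lemma count_mset_powers: "finite P \<Longrightarrow> count (mset_powers P e) q = (if q \<in> P then e q else 0)"
  unfolding mset_powers_def by (simp add: count_sum if_distrib sum.delta cong: if_cong)

lemma set_mset_powers: "finite P \<Longrightarrow> set_mset (mset_powers P e) \<subseteq> P"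
  by (auto simp: count_mset_powers simp flip: count_greater_zero_iff split: if_splits)

lemma factorization_prod_powers:
  assumes "finite P" "\<forall>p\<in>P. as_irreducible p"
  shows "factorization (prod_powers P e) = mset_powers P e"
  unfolding prod_powers_eq_prod_mset
  using set_mset_powers[OF assms(1)] assms(2) by (intro factorization_prod_mset) auto

lemma bij_betw_prod_powers:
  assumes P: "finite P" "\<forall>p\<in>P. as_irreducible p"
  shows "bij_betw (prod_powers P) (PiE P (\<lambda>_. UNIV)) (supported_on P)"
proof (rule bij_betw_imageI)
  show "inj_on (prod_powers P) (PiE P (\<lambda>_. UNIV))"
  proof
    fix e e' assume e: "e \<in> PiE P (\<lambda>_. UNIV)" and e': "e' \<in> PiE P (\<lambda>_. UNIV)"
      and "prod_powers P e = prod_powers P e'"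
    then have "mset_powers P e = mset_powers P e'"
      using factorization_prod_powers[OF P] by metis
    then have "count (mset_powers P e) q = count (mset_powers P e') q" for q
      by simp
    then have "\<forall>q\<in>P. e q = e' q"
      using count_mset_powers[OF P(1)] by metis
    then show "e = e'" using e e' by (metis PiE_ext)
  qed
  show "prod_powers P ` PiE P (\<lambda>_. UNIV) = supported_on P"
  proof safe
    fix e :: "'a \<Rightarrow> nat"
    show "prod_powers P e \<in> supported_on P"
      using factorization_prod_powers[OF P] set_mset_powers[OF P(1)] by (simp add: supported_on_def)
  next
    fix g assume g: "g \<in> supported_on P"
    define e where "e = (\<lambda>p\<in>P. count (factorization g) p)"
    have "mset_powers P e = factorization g"
      using g by (intro multiset_eqI)
        (auto simp: count_mset_powers[OF P(1)] e_def supported_on_def simp flip: count_greater_zero_iff)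
    then have "prod_powers P e = g"
      using factorization[of g] by (simp add: prod_powers_eq_prod_mset)
    moreover have "e \<in> PiE P (\<lambda>_. UNIV)" by (simp add: e_def)
    ultimately show "g \<in> prod_powers P ` PiE P (\<lambda>_. UNIV)" by blast
  qed
qed

lemma cpow_neg_nrm_prod_powers:
  "cpow_neg s (nrm (prod_powers P e)) = (\<Prod>p\<in>P. cpow_neg s (nrm p) ^ e p)"
proof -
  have "cpow_neg s (nrm (prod_powers P e)) = cpow_neg s (\<Prod>p\<in>P. nrm p ^ e p)"
    by (simp add: prod_powers_def nrm_prod nrm_power)
  also have "\<dots> = (\<Prod>p\<in>P. cpow_neg s (nrm p) ^ e p)"
    by (induction P rule: infinite_finite_induct)
       (use nrm_pos in \<open>auto simp: cpow_neg_mult cpow_neg_power prod_pos\<close>)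
  finally show ?thesis .
qed

lemma euler_product_supported_on:
  assumes P: "finite P" "\<forall>p\<in>P. as_irreducible p" and "Re s > 0"
  shows "infsum (\<lambda>g. cpow_neg s (nrm g)) (supported_on P) = (\<Prod>p\<in>P. 1 / (1 - cpow_neg s (nrm p)))"
proof -
  have lt1: "norm (cpow_neg s (nrm p)) < 1" if "p \<in> P" for p
    using nrm_irreducible_gt_1[of p] assms that by (simp add: norm_cpow_neg powr_less_one nrm_pos)
  have "infsum (\<lambda>g. cpow_neg s (nrm g)) (supported_on P)
      = infsum (\<lambda>e. \<Prod>p\<in>P. cpow_neg s (nrm p) ^ e p) (PiE P (\<lambda>_. UNIV))"
    using infsum_reindex_bij_betw[OF bij_betw_prod_powers[OF P], of "\<lambda>g. cpow_neg s (nrm g)"]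
    by (simp add: cpow_neg_nrm_prod_powers)
  also have "\<dots> = (\<Prod>p\<in>P. infsum (\<lambda>k. cpow_neg s (nrm p) ^ k) UNIV)"
  proof (rule infsum_prod_PiE_abs[OF P(1)])
    fix p assume "p \<in> P"
    then show "(\<lambda>k. norm (cpow_neg s (nrm p) ^ k)) summable_on UNIV"
      using lt1 by (auto simp: norm_power intro!: norm_summable_imp_summable_on summable_geometric)
  qed
  also have "\<dots> = (\<Prod>p\<in>P. 1 / (1 - cpow_neg s (nrm p)))"
    using lt1 by (intro prod.cong refl infsumI norm_summable_imp_has_sum)
      (auto simp: norm_power intro!: summable_geometric geometric_sums)
  finally show ?thesis .
qed


subsection \<open>Partial sums and the counting function\<close>

definition elements_le :: "real \<Rightarrow> 'a set" where
  "elements_le X = {g. nrm g \<le> X}"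

definition zeta_partial :: "real \<Rightarrow> complex \<Rightarrow> complex" where
  "zeta_partial X s = (\<Sum>g\<in>elements_le X. cpow_neg s (nrm g))"

definition zeta :: "complex \<Rightarrow> complex" where
  "zeta s = infsum (\<lambda>g. cpow_neg s (nrm g)) UNIV"

lemma zeta_G_eq_zeta: "zeta_G nrm s = zeta s"
  unfolding zeta_G_def zeta_def using nrm_pos by (simp add: cpow_neg_eq_powr)

lemma zeta_cnj: "zeta (cnj s) = cnj (zeta s)"
  unfolding zeta_def by (simp add: cpow_neg_cnj)

lemma finite_elements_le [simp]: "finite (elements_le X)"
  by (simp add: elements_le_def finite_nrm_le)

lemma count_N_eq_card: "count_N nrm X = real (card (elements_le X))"
  by (simp add: count_N_def elements_le_def)

lemma count_N_mono: "x \<le> y \<Longrightarrow> count_N nrm x \<le> count_N nrm y"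
  unfolding count_N_eq_card by (intro of_nat_mono card_mono) (auto simp: elements_le_def finite_nrm_le)

lemma count_N_nonneg: "count_N nrm x \<ge> 0"
  by (simp add: count_N_eq_card)

lemma count_N_has_integral:
  assumes "X \<ge> 1" "s \<noteq> 0"
  shows "((\<lambda>x. of_real (count_N nrm x) * cpow_neg (s + 1) x) has_integral
           (zeta_partial X s - of_real (count_N nrm X) * cpow_neg s X) / s) {1..X}"
proof -
  have "((\<lambda>x. if x \<in> {nrm g..X} then cpow_neg (s + 1) x else 0) has_integral
          (cpow_neg s (nrm g) - cpow_neg s X) / s) {1..X}" if "g \<in> elements_le X" for g
  proof -
    have "(cpow_neg (s + 1) has_integral (cpow_neg s (nrm g) - cpow_neg s X) / s) {nrm g..X}"
      using that assms nrm_pos[of g] by (intro cpow_neg_has_integral) (auto simp: elements_le_def)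
    moreover have "{nrm g..X} \<subseteq> {1..X}" using nrm_ge_1[of g] by auto
    ultimately show ?thesis by (subst has_integral_restrict) auto
  qed
  from has_integral_sum[OF finite_elements_le this]
  have sum_integral: "((\<lambda>x. \<Sum>g\<in>elements_le X. if x \<in> {nrm g..X} then cpow_neg (s + 1) x else 0) has_integral
          (\<Sum>g\<in>elements_le X. (cpow_neg s (nrm g) - cpow_neg s X) / s)) {1..X}" .
  have integrand: "(\<Sum>g\<in>elements_le X. if x \<in> {nrm g..X} then cpow_neg (s + 1) x else 0)
      = of_real (count_N nrm x) * cpow_neg (s + 1) x" if "x \<in> {1..X}" for x
  proof -
    have "{g\<in>elements_le X. nrm g \<le> x} = elements_le x"
      using that by (auto simp: elements_le_def)
    then show ?thesis
      using that by (simp add: sum.inter_filter[symmetric] count_N_eq_card)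
  qed
  moreover have "(\<Sum>g\<in>elements_le X. (cpow_neg s (nrm g) - cpow_neg s X) / s)
      = (zeta_partial X s - of_real (count_N nrm X) * cpow_neg s X) / s"
    by (simp add: zeta_partial_def count_N_eq_card sum_divide_distrib[symmetric] sum_subtractf)
  ultimately show ?thesis
    using has_integral_eq[OF integrand sum_integral] by simp
qed

lemma tendsto_sum_elements_le:
  assumes "f summable_on UNIV"
  shows "((\<lambda>X. sum f (elements_le X)) \<longlongrightarrow> infsum f UNIV) at_top"
proof -
  have "filterlim elements_le (finite_subsets_at_top UNIV) at_top"
    unfolding filterlim_finite_subsets_at_top
  proof safe
    fix F :: "'a set" assume "finite F"
    then have "F \<subseteq> elements_le X" if "X \<ge> Max (insert 0 (nrm ` F))" for X
      using that by (force simp: elements_le_def intro: order.trans[OF Max_ge])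
    then have "\<forall>\<^sub>F X in at_top. F \<subseteq> elements_le X"
      unfolding eventually_at_top_linorder by blast
    then show "\<forall>\<^sub>F X in at_top. finite (elements_le X) \<and> F \<subseteq> elements_le X \<and> elements_le X \<subseteq> UNIV"
      by simp
  qed
  moreover have "(sum f \<longlongrightarrow> infsum f UNIV) (finite_subsets_at_top UNIV)"
    using has_sum_infsum[OF assms] by (simp add: has_sum_def)
  ultimately show ?thesis
    using filterlim_compose by (auto simp: o_def)
qed

subsection \<open>Products of zeta values on horizontal translates\<close>

definition irreducibles_le :: "real \<Rightarrow> 'a set" where
  "irreducibles_le y = {p. as_irreducible p \<and> nrm p \<le> y}"

definition zeta_smooth :: "real \<Rightarrow> complex \<Rightarrow> complex" where
  "zeta_smooth y s = infsum (\<lambda>g. cpow_neg s (nrm g)) (supported_on (irreducibles_le y))"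

lemma finite_irreducibles_le: "finite (irreducibles_le y)"
  by (rule finite_subset[OF _ finite_nrm_le[of y]]) (auto simp: irreducibles_le_def)

lemma elements_le_subset_supported_on: "elements_le y \<subseteq> supported_on (irreducibles_le y)"
proof
  fix g assume "g \<in> elements_le y"
  then show "g \<in> supported_on (irreducibles_le y)"
    using factorization[of g] nrm_le_of_in_factorization[of _ g]
    by (force simp: elements_le_def supported_on_def irreducibles_le_def)
qed

lemma zeta_smooth_tendsto:
  assumes summable: "(\<lambda>g. norm (cpow_neg s (nrm g))) summable_on UNIV"
  shows "((\<lambda>y. zeta_smooth y s) \<longlongrightarrow> zeta s) at_top"
proof -
  define f where "f g = cpow_neg s (nrm g)" for g
  define nf where "nf g = norm (f g)" for g
  have sf: "f summable_on UNIV"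
    unfolding f_def by (rule abs_summable_summable[OF summable])
  have snf: "nf summable_on UNIV"
    unfolding nf_def f_def by (rule summable)
  have bound: "norm (zeta s - zeta_smooth y s) \<le> infsum nf UNIV - sum nf (elements_le y)" for y
  proof -
    define S where "S = supported_on (irreducibles_le y)"
    have "zeta s - zeta_smooth y s = infsum f (UNIV - S)"
      unfolding zeta_def zeta_smooth_def f_def[symmetric] S_def[symmetric]
      by (rule infsum_Diff[symmetric, OF sf summable_on_subset_banach[OF sf]]) auto
    also have "norm \<dots> \<le> infsum nf (UNIV - S)"
      unfolding nf_def by (rule norm_infsum_bound) (rule summable_on_subset_banach[OF snf[unfolded nf_def]], auto)
    also have "\<dots> \<le> infsum nf (UNIV - elements_le y)"
      using elements_le_subset_supported_on[of y]
      by (intro infsum_mono_neutral summable_on_subset_banach[OF snf]) (auto simp: nf_def S_def)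
    also have "\<dots> = infsum nf UNIV - sum nf (elements_le y)"
      by (simp add: infsum_Diff[OF snf])
    finally show ?thesis .
  qed
  have "((\<lambda>y. infsum nf UNIV - sum nf (elements_le y)) \<longlongrightarrow> infsum nf UNIV - infsum nf UNIV) at_top"
    by (intro tendsto_diff tendsto_const tendsto_sum_elements_le snf)
  then have tail_to_0: "((\<lambda>y. infsum nf UNIV - sum nf (elements_le y)) \<longlongrightarrow> 0) at_top"
    by simp
  have "((\<lambda>y. zeta s - zeta_smooth y s) \<longlongrightarrow> 0) at_top"
  proof (rule Lim_null_comparison)
    show "\<forall>\<^sub>F y in at_top. norm (zeta s - zeta_smooth y s) \<le> infsum nf UNIV - sum nf (elements_le y)"
      using bound by (intro always_eventually) auto
  qed (rule tail_to_0)
  then have "((\<lambda>y. zeta s - (zeta s - zeta_smooth y s)) \<longlongrightarrow> zeta s - 0) at_top"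
    by (intro tendsto_diff tendsto_const)
  then show ?thesis by simp
qed

lemma cpow_neg_shift_eq:
  "cpow_neg (Complex \<sigma> ((real l - real l') * t)) (nrm p)
     = of_real (nrm p powr (- \<sigma>)) * cis (- real l * t * ln (nrm p)) * cnj (cis (- real l' * t * ln (nrm p)))"
  by (simp add: cpow_neg_Complex nrm_pos cis_cnj cis_mult algebra_simps)

lemma prod_norm_zeta_smooth_ge_1:
  assumes "\<sigma> > 0"
  shows "(\<Prod>l<n. \<Prod>l'<n. norm (zeta_smooth y (Complex \<sigma> ((real l - real l') * t)))) \<ge> 1"
proof -
  define P where "P = irreducibles_le y"
  have P: "finite P" "\<forall>p\<in>P. as_irreducible p"
    using finite_irreducibles_le by (auto simp: P_def irreducibles_le_def)
  define r where "r p = nrm p powr (- \<sigma>)" for p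
  define u where "u p l = cis (- real l * t * ln (nrm p))" for p l
  have "norm (zeta_smooth y (Complex \<sigma> ((real l - real l') * t))) =
      (\<Prod>p\<in>P. 1 / norm (1 - of_real (r p) * u p l * cnj (u p l')))" for l l'
    using euler_product_supported_on[OF P, of "Complex \<sigma> ((real l - real l') * t)"] assms
    by (simp add: zeta_smooth_def P_def cpow_neg_shift_eq r_def u_def prod_norm[symmetric] norm_divide)
  then have "(\<Prod>l<n. \<Prod>l'<n. norm (zeta_smooth y (Complex \<sigma> ((real l - real l') * t))))
      = (\<Prod>p\<in>P. \<Prod>l<n. \<Prod>l'<n. 1 / norm (1 - of_real (r p) * u p l * cnj (u p l')))"
    by (simp only:) (subst prod.swap, subst (2) prod.swap, rule refl)
  also have "\<dots> \<ge> 1"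
  proof (rule prod_ge_1)
    fix p assume "p \<in> P"
    then have "0 \<le> r p" "r p < 1"
      using nrm_irreducible_gt_1[of p] P assms by (auto simp: r_def intro!: powr_less_one)
    then show "1 \<le> (\<Prod>l<n. \<Prod>l'<n. 1 / norm (1 - of_real (r p) * u p l * cnj (u p l')))"
      by (rule prod_inverse_norm_one_minus_rotations_ge_1) (simp add: u_def)
  qed
  finally show ?thesis .
qed

lemma prod_norm_zeta_shifts_ge_1:
  assumes "\<sigma> > 0" and summable: "(\<lambda>g. nrm g powr (- \<sigma>)) summable_on UNIV"
  shows "(\<Prod>l<n. \<Prod>l'<n. norm (zeta (Complex \<sigma> ((real l - real l') * t)))) \<ge> 1"
proof (rule tendsto_lowerbound)
  show "((\<lambda>y. \<Prod>l<n. \<Prod>l'<n. norm (zeta_smooth y (Complex \<sigma> ((real l - real l') * t)))) \<longlongrightarrow>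
        (\<Prod>l<n. \<Prod>l'<n. norm (zeta (Complex \<sigma> ((real l - real l') * t))))) at_top"
    using summable nrm_pos
    by (intro tendsto_prod tendsto_norm zeta_smooth_tendsto) (simp add: norm_cpow_neg)
qed (use prod_norm_zeta_smooth_ge_1[OF assms(1)] in auto)

end

locale arithmetic_semigroup_remainder = arithmetic_semigroup nrm
  for nrm :: "'a::comm_monoid_mult \<Rightarrow> real" +
  fixes A :: real
begin

definition remainder :: "real \<Rightarrow> real" where
  "remainder x = count_N nrm x - A * x"

definition remainder_integral :: "real \<Rightarrow> complex \<Rightarrow> complex" where
  "remainder_integral X s = integral {1..X} (\<lambda>x. of_real (remainder x) * cpow_neg (s + 1) x)"

lemma remainder_has_integral:
  assumes "X \<ge> 1" "s \<noteq> 0" "s \<noteq> 1"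
  shows "((\<lambda>x. of_real (remainder x) * cpow_neg (s + 1) x) has_integral
           (zeta_partial X s - of_real (count_N nrm X) * cpow_neg s X) / s
             - of_real A * ((1 - cpow_neg (s - 1) X) / (s - 1))) {1..X}"
  using has_integral_diff[OF count_N_has_integral[OF assms(1,2)]
      cpow_neg_linear_has_integral[where A = A, OF assms(1,3)]]
  by (simp add: remainder_def algebra_simps)

lemma remainder_integrable:
  assumes "X \<ge> 1" "Re s > 1"
  shows "(\<lambda>x. of_real (remainder x) * cpow_neg (s + 1) x) integrable_on {1..X}"
  using assms by (intro has_integral_integrable[OF remainder_has_integral]) auto

lemma zeta_partial_eq:
  assumes "X \<ge> 1" "Re s > 1"
  shows "zeta_partial X s = of_real (count_N nrm X) * cpow_neg s X
           + of_real A * s * ((1 - cpow_neg (s - 1) X) / (s - 1)) + s * remainder_integral X s"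
proof -
  have s: "s \<noteq> 0" "s \<noteq> 1" using assms by auto
  have "remainder_integral X s = (zeta_partial X s - of_real (count_N nrm X) * cpow_neg s X) / s
          - of_real A * ((1 - cpow_neg (s - 1) X) / (s - 1))"
    unfolding remainder_integral_def using remainder_has_integral[OF assms(1) s] by (rule integral_unique)
  then show ?thesis
    using s by (simp add: field_simps)
qed

end

text \<open>\<open>\<theta>\<close> is the Hoelder exponent obtained for the Mellin transform of the remainder in the real
  direction; \<open>\<gamma> - \<theta> > 1\<close> is what makes \<open>\<integral> (ln x)\<^sup>\<theta> \<bar>R(x)\<bar> / x\<^sup>2 dx\<close> converge.\<close>
locale arithmetic_semigroup_bounded_remainder = arithmetic_semigroup_remainder nrm A
  for nrm :: "'a::comm_monoid_mult \<Rightarrow> real" and A :: real +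
  fixes K x0 \<gamma> \<theta> :: real
  assumes x0_ge_exp1: "x0 \<ge> exp 1" and K_nonneg: "K \<ge> 0"
    and theta_pos: "0 < \<theta>" and theta_le_1: "\<theta> \<le> 1" and gamma_theta: "\<gamma> - \<theta> > 1"
    and remainder_bound: "\<And>x. x \<ge> x0 \<Longrightarrow> \<bar>remainder x\<bar> \<le> K * x / ln x powr \<gamma>"
begin

definition remainder_weight :: "real \<Rightarrow> real" where
  "remainder_weight x = \<bar>remainder x\<bar> / x\<^sup>2 * (1 + ln x powr \<theta>)"

definition initial_bound :: real where
  "initial_bound = (count_N nrm x0 + \<bar>A\<bar> * x0) * (1 + ln x0 powr \<theta>)"

definition transform_bound :: real where
  "transform_bound = initial_bound * (x0 - 1) + 2 * K / (\<gamma> - \<theta> - 1)"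

lemma x0_ge_1: "x0 \<ge> 1"
  using x0_ge_exp1 one_le_exp_iff[of 1] by linarith

lemma ln_ge_1: "x \<ge> x0 \<Longrightarrow> ln x \<ge> 1"
  using x0_ge_exp1 x0_ge_1 by (subst ln_ge_iff) auto

lemma gamma_pos: "\<gamma> > 0"
  using gamma_theta theta_pos by linarith

lemma transform_bound_nonneg: "transform_bound \<ge> 0"
  unfolding transform_bound_def initial_bound_def
  using count_N_nonneg[of x0] x0_ge_1 K_nonneg gamma_theta
  by (intro add_nonneg_nonneg mult_nonneg_nonneg divide_nonneg_nonneg) auto

lemma remainder_weight_le_initial_bound:
  assumes "1 \<le> x" "x \<le> x0"
  shows "remainder_weight x \<le> initial_bound"
proof -
  have "\<bar>remainder x\<bar> \<le> count_N nrm x + \<bar>A\<bar> * x"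
    using abs_triangle_ineq4[of "count_N nrm x" "A * x"] count_N_nonneg[of x] assms
    by (simp add: remainder_def abs_mult)
  also have "\<dots> \<le> count_N nrm x0 + \<bar>A\<bar> * x0"
    using count_N_mono[OF assms(2)] assms by (intro add_mono mult_left_mono) auto
  moreover have "\<bar>remainder x\<bar> / x\<^sup>2 \<le> \<bar>remainder x\<bar> / 1"
    using assms by (intro divide_left_mono) (auto simp: one_le_power)
  ultimately have "\<bar>remainder x\<bar> / x\<^sup>2 \<le> count_N nrm x0 + \<bar>A\<bar> * x0"
    by simp
  moreover have "ln x powr \<theta> \<le> ln x0 powr \<theta>"
    using assms theta_pos by (intro powr_mono2) auto
  ultimately show ?thesis
    unfolding remainder_weight_def initial_bound_def using count_N_nonneg[of x0] x0_ge_1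
    by (intro mult_mono) auto
qed

lemma remainder_weight_le_tail_bound:
  assumes "x \<ge> x0"
  shows "remainder_weight x \<le> 2 * K * (ln x powr (- (\<gamma> - \<theta>)) / x)"
proof -
  have l: "ln x \<ge> 1" using ln_ge_1[OF assms] .
  have x: "x > 0" using assms x0_ge_1 by auto
  have "1 + ln x powr \<theta> \<le> 2 * ln x powr \<theta>"
    using l theta_pos by (simp add: ge_one_powr_ge_zero)
  moreover have "\<bar>remainder x\<bar> / x\<^sup>2 \<le> K / ln x powr \<gamma> / x"
    using remainder_bound[OF assms] x by (simp add: power2_eq_square divide_le_eq field_simps)
  ultimately have "remainder_weight x \<le> K / ln x powr \<gamma> / x * (2 * ln x powr \<theta>)"
    unfolding remainder_weight_def using K_nonneg x by (intro mult_mono) auto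
  also have "\<dots> = 2 * K * (ln x powr (- (\<gamma> - \<theta>)) / x)"
    using l by (simp add: powr_minus powr_diff field_simps powr_add[symmetric])
  finally show ?thesis .
qed

lemma tail_majorant_has_integral:
  assumes "X \<ge> x0"
  shows "((\<lambda>x. ln x powr (- (\<gamma> - \<theta>)) / x) has_integral
           (ln x0 powr (1 - (\<gamma> - \<theta>)) - ln X powr (1 - (\<gamma> - \<theta>))) / (\<gamma> - \<theta> - 1)) {x0..X}"
proof -
  define a where "a = \<gamma> - \<theta>"
  have a: "a > 1" using gamma_theta by (simp add: a_def)
  have "((\<lambda>x. - (ln x powr (1 - a)) / (a - 1)) has_vector_derivative (ln x powr (- a) / x))
          (at x within {x0..X})" if "x \<in> {x0..X}" for x
  proof -
    have x: "ln x \<ge> 1" "x > 1"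
      using ln_ge_1 that x0_ge_exp1 less_le_trans[OF exp_gt_one[of 1]] by auto
    then have "((\<lambda>x. - (ln x powr (1 - a)) / (a - 1)) has_real_derivative
                 (- ((1 - a) * ln x powr (1 - a - 1) * (1 / x)) / (a - 1))) (at x within {x0..X})"
      using a by (auto intro!: derivative_eq_intros)
    moreover have "- ((1 - a) * ln x powr (1 - a - 1) * (1 / x)) / (a - 1) = ln x powr (- a) / x"
      using a x by (simp add: field_simps diff_diff_eq[symmetric])
    ultimately show ?thesis
      by (simp add: has_real_derivative_iff_has_vector_derivative)
  qed
  from fundamental_theorem_of_calculus[OF assms this]
  show ?thesis
    by (simp add: a_def diff_divide_distrib)
qed

lemma tail_majorant_integral_le:
  assumes "X \<ge> x0"
  shows "(ln x0 powr (1 - (\<gamma> - \<theta>)) - ln X powr (1 - (\<gamma> - \<theta>))) / (\<gamma> - \<theta> - 1) \<le> 1 / (\<gamma> - \<theta> - 1)"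
proof -
  have "ln x0 powr (1 - (\<gamma> - \<theta>)) \<le> ln x0 powr 0"
    using ln_ge_1[of x0] gamma_theta by (intro powr_mono) auto
  moreover have "ln x0 powr 0 = 1" "ln X powr (1 - (\<gamma> - \<theta>)) \<ge> 0"
    using ln_ge_1[of x0] by auto
  ultimately have "ln x0 powr (1 - (\<gamma> - \<theta>)) - ln X powr (1 - (\<gamma> - \<theta>)) \<le> 1"
    by linarith
  then show ?thesis
    using gamma_theta by (intro divide_right_mono) auto
qed

lemma norm_integral_tail_le:
  fixes f :: "real \<Rightarrow> complex"
  assumes X: "X \<ge> x0" and c: "c \<ge> 0" and f: "f integrable_on {x0..X}"
    and f_le: "\<And>x. x \<in> {x0..X} \<Longrightarrow> norm (f x) \<le> c * remainder_weight x"
  shows "norm (integral {x0..X} f) \<le> c * (2 * K / (\<gamma> - \<theta> - 1))"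
proof -
  define g where "g x = c * (2 * K) * (ln x powr (- (\<gamma> - \<theta>)) / x)" for x
  have g: "(g has_integral c * (2 * K) *
             ((ln x0 powr (1 - (\<gamma> - \<theta>)) - ln X powr (1 - (\<gamma> - \<theta>))) / (\<gamma> - \<theta> - 1))) {x0..X}"
    unfolding g_def by (intro has_integral_mult_right tail_majorant_has_integral X)
  have "norm (integral {x0..X} f) \<le> integral {x0..X} g"
  proof (rule integral_norm_bound_integral[OF f has_integral_integrable[OF g]])
    fix x assume x: "x \<in> {x0..X}"
    then have "norm (f x) \<le> c * remainder_weight x" by (rule f_le)
    also have "\<dots> \<le> c * (2 * K * (ln x powr (- (\<gamma> - \<theta>)) / x))"
      using x by (intro mult_left_mono remainder_weight_le_tail_bound c) auto
    also have "\<dots> = g x" by (simp add: g_def)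
    finally show "norm (f x) \<le> g x" .
  qed
  also have "\<dots> = c * (2 * K) *
      ((ln x0 powr (1 - (\<gamma> - \<theta>)) - ln X powr (1 - (\<gamma> - \<theta>))) / (\<gamma> - \<theta> - 1))"
    by (rule integral_unique[OF g])
  also have "\<dots> \<le> c * (2 * K) * (1 / (\<gamma> - \<theta> - 1))"
    using c K_nonneg by (intro mult_left_mono tail_majorant_integral_le X) auto
  finally show ?thesis by simp
qed

lemma norm_integral_le_transform_bound:
  fixes f :: "real \<Rightarrow> complex"
  assumes X: "X \<ge> x0" and c: "c \<ge> 0" and f: "f integrable_on {1..X}"
    and f_le: "\<And>x. x \<in> {1..X} \<Longrightarrow> norm (f x) \<le> c * remainder_weight x"
  shows "norm (integral {1..X} f) \<le> c * transform_bound"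
proof -
  have "norm (integral {1..x0} f) \<le> integral {1..x0} (\<lambda>x. c * initial_bound)"
    using X integrable_subinterval_real[OF f, of 1 x0]
    by (intro integral_norm_bound_integral)
       (auto intro!: order.trans[OF f_le] mult_left_mono remainder_weight_le_initial_bound c)
  also have "\<dots> = c * initial_bound * (x0 - 1)"
    using x0_ge_1 by simp
  finally have "norm (integral {1..x0} f) \<le> c * initial_bound * (x0 - 1)" .
  moreover have "norm (integral {x0..X} f) \<le> c * (2 * K / (\<gamma> - \<theta> - 1))"
    using X c x0_ge_1 integrable_subinterval_real[OF f, of x0 X]
    by (intro norm_integral_tail_le f_le) auto
  moreover have "integral {1..X} f = integral {1..x0} f + integral {x0..X} f"
    using X x0_ge_1 f by (intro Henstock_Kurzweil_Integration.integral_combine[symmetric]) auto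
  ultimately show ?thesis
    using norm_triangle_ineq[of "integral {1..x0} f" "integral {x0..X} f"]
    by (simp add: transform_bound_def algebra_simps)
qed


lemma count_N_le_linear:
  assumes "X \<ge> x0"
  shows "count_N nrm X \<le> (\<bar>A\<bar> + K) * X"
proof -
  have X: "X \<ge> 1" using assms x0_ge_1 by linarith
  have "ln X powr \<gamma> \<ge> 1"
    using ln_ge_1[OF assms] gamma_pos by (intro ge_one_powr_ge_zero) auto
  then have "K * X / ln X powr \<gamma> \<le> K * X / 1"
    using K_nonneg X by (intro divide_left_mono) auto
  then have "\<bar>remainder X\<bar> \<le> K * X"
    using remainder_bound[OF assms] by linarith
  moreover have "A * X \<le> \<bar>A\<bar> * X"
    using X by (intro mult_right_mono) auto
  ultimately show ?thesis
    by (simp add: remainder_def algebra_simps)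
qed

lemma norm_remainder_integrand_le:
  assumes "x \<ge> 1" "Re s \<ge> 1"
  shows "norm (of_real (remainder x) * cpow_neg (s + 1) x) \<le> \<bar>remainder x\<bar> / x\<^sup>2"
proof -
  have "norm (of_real (remainder x) * cpow_neg (s + 1) x) \<le> \<bar>remainder x\<bar> * x powr (- 2)"
    using assms by (simp add: norm_mult mult_left_mono norm_cpow_neg_le)
  also have "\<dots> = \<bar>remainder x\<bar> / x\<^sup>2"
    using assms by (simp add: powr_minus powr_realpow divide_inverse)
  finally show ?thesis .
qed

lemma remainder_weight_ge: "\<bar>remainder x\<bar> / x\<^sup>2 \<le> remainder_weight x"
  unfolding remainder_weight_def using mult_left_mono[of 1 "1 + ln x powr \<theta>" "\<bar>remainder x\<bar> / x\<^sup>2"]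
  by simp

lemma norm_remainder_integral_le:
  assumes "X \<ge> x0" "Re s > 1"
  shows "norm (remainder_integral X s) \<le> transform_bound"
  using norm_integral_le_transform_bound[of X 1] remainder_integrable[of X s]
    order.trans[OF norm_remainder_integrand_le remainder_weight_ge] assms x0_ge_1
  by (simp add: remainder_integral_def)

text \<open>This is where the Hoelder exponent \<open>\<theta>\<close> enters.\<close>
lemma norm_one_minus_cpow_neg_le:
  assumes "x \<ge> 1" "0 \<le> d"
  shows "norm (1 - cpow_neg (of_real d) x) \<le> d powr \<theta> * ln x powr \<theta>"
proof -
  have "1 - cpow_neg (of_real d) x = of_real (1 - exp (- (d * ln x)))"
    using assms by (simp add: cpow_neg_of_real powr_def)
  then have "norm (1 - cpow_neg (of_real d) x) = \<bar>1 - exp (- (d * ln x))\<bar>"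
    by (simp only: norm_of_real)
  moreover have "1 - exp (- (d * ln x)) \<ge> 0" and "1 - exp (- (d * ln x)) \<le> (d * ln x) powr \<theta>"
    using assms theta_pos theta_le_1 by (auto intro!: one_minus_exp_neg_le_powr)
  ultimately show ?thesis
    using assms by (simp add: powr_mult)
qed

lemma norm_remainder_integral_diff_le:
  assumes X: "X \<ge> x0" and s: "Re s > 1" and d: "0 \<le> d"
  shows "norm (remainder_integral X s - remainder_integral X (s + of_real d)) \<le> d powr \<theta> * transform_bound"
proof -
  define f where "f s x = of_real (remainder x) * cpow_neg (s + 1) x" for s x
  have "remainder_integral X s - remainder_integral X (s + of_real d)
      = integral {1..X} (\<lambda>x. f s x - f (s + of_real d) x)"
    unfolding remainder_integral_def f_def
    using X x0_ge_1 s d by (intro integral_diff[symmetric] remainder_integrable) auto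
  also have "norm \<dots> \<le> d powr \<theta> * transform_bound"
  proof (rule norm_integral_le_transform_bound[OF X])
    show "(\<lambda>x. f s x - f (s + of_real d) x) integrable_on {1..X}"
      unfolding f_def using X x0_ge_1 s d by (intro integrable_diff remainder_integrable) auto
    fix x assume x: "x \<in> {1..X}"
    have "f s x - f (s + of_real d) x = f s x * (1 - cpow_neg (of_real d) x)"
      by (simp add: f_def cpow_neg_add[symmetric] algebra_simps)
    then have "norm (f s x - f (s + of_real d) x)
        = norm (f s x) * norm (1 - cpow_neg (of_real d) x)"
      by (simp add: norm_mult)
    also have "\<dots> \<le> \<bar>remainder x\<bar> / x\<^sup>2 * (d powr \<theta> * ln x powr \<theta>)"
      unfolding f_def using x s d
      by (intro mult_mono norm_remainder_integrand_le norm_one_minus_cpow_neg_le) auto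
    also have "\<dots> = d powr \<theta> * (\<bar>remainder x\<bar> / x\<^sup>2 * ln x powr \<theta>)"
      by (simp add: mult_ac)
    also have "\<dots> \<le> d powr \<theta> * remainder_weight x"
      unfolding remainder_weight_def by (intro mult_left_mono) (auto simp: algebra_simps)
    finally show "norm (f s x - f (s + of_real d) x) \<le> d powr \<theta> * remainder_weight x" .
  qed simp
  finally show ?thesis .
qed

lemma norm_zeta_partial_real_le:
  assumes X: "X \<ge> x0" and \<sigma>: "\<sigma> > 1"
  shows "norm (zeta_partial X (of_real \<sigma>)) \<le> (\<bar>A\<bar> + K) + \<bar>A\<bar> * \<sigma> / (\<sigma> - 1) + \<sigma> * transform_bound"
proof -
  define s where "s = complex_of_real \<sigma>"
  have X1: "X \<ge> 1" using X x0_ge_1 by linarith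
  have Re: "Re s > 1" using \<sigma> by (simp add: s_def)
  have X_powr: "0 \<le> X powr (1 - \<sigma>)" "X powr (1 - \<sigma>) \<le> 1"
    using X1 \<sigma> powr_mono[of "1 - \<sigma>" 0 X] by auto
  have "norm (of_real (count_N nrm X) * cpow_neg s X) = count_N nrm X * X powr (- \<sigma>)"
    using X1 count_N_nonneg[of X] by (simp add: norm_mult norm_cpow_neg s_def)
  also have "\<dots> \<le> (\<bar>A\<bar> + K) * X * X powr (- \<sigma>)"
    using count_N_le_linear[OF X] by (intro mult_right_mono) auto
  also have "\<dots> = (\<bar>A\<bar> + K) * X powr (1 - \<sigma>)"
    using X1 by (simp add: powr_diff powr_minus divide_inverse)
  also have "\<dots> \<le> \<bar>A\<bar> + K"
    using X_powr K_nonneg mult_left_mono[of "X powr (1 - \<sigma>)" 1 "\<bar>A\<bar> + K"] by simp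
  finally have first: "norm (of_real (count_N nrm X) * cpow_neg s X) \<le> \<bar>A\<bar> + K" .
  have "1 - cpow_neg (s - 1) X = of_real (1 - X powr (1 - \<sigma>))"
    using X1 cpow_neg_of_real[of X "\<sigma> - 1"] by (simp add: s_def)
  then have "norm (1 - cpow_neg (s - 1) X) = \<bar>1 - X powr (1 - \<sigma>)\<bar>"
    by (simp only: norm_of_real)
  then have norm_le_1: "norm (1 - cpow_neg (s - 1) X) \<le> 1"
    using X_powr by simp
  have "norm s = \<sigma>" "norm (s - 1) = \<sigma> - 1"
    using \<sigma> by (simp_all add: s_def) (metis abs_of_pos diff_gt_0_iff_gt norm_of_real of_real_1 of_real_diff)
  then have "norm (of_real A * s * ((1 - cpow_neg (s - 1) X) / (s - 1)))
      = \<bar>A\<bar> * \<sigma> * (norm (1 - cpow_neg (s - 1) X) / (\<sigma> - 1))"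
    by (simp add: norm_mult norm_divide)
  also have "\<dots> \<le> \<bar>A\<bar> * \<sigma> * (1 / (\<sigma> - 1))"
    using norm_le_1 \<sigma> by (intro mult_left_mono divide_right_mono) auto
  finally have second: "norm (of_real A * s * ((1 - cpow_neg (s - 1) X) / (s - 1))) \<le> \<bar>A\<bar> * \<sigma> / (\<sigma> - 1)"
    by simp
  have third: "norm (s * remainder_integral X s) \<le> \<sigma> * transform_bound"
    using norm_remainder_integral_le[OF X Re] \<sigma> by (simp add: s_def norm_mult)
  have "norm (zeta_partial X s) \<le> norm (of_real (count_N nrm X) * cpow_neg s X)
      + norm (of_real A * s * ((1 - cpow_neg (s - 1) X) / (s - 1))) + norm (s * remainder_integral X s)"
    unfolding zeta_partial_eq[OF X1 Re]
    by (intro order.trans[OF norm_triangle_ineq] add_mono norm_triangle_ineq order.refl)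
  then show ?thesis
    using first second third by (simp add: s_def)
qed

lemma summable_nrm_powr:
  assumes \<sigma>: "\<sigma> > 1"
  shows "(\<lambda>g. nrm g powr (- \<sigma>)) summable_on UNIV"
proof (rule nonneg_bdd_above_summable_on)
  define M where "M = (\<bar>A\<bar> + K) + \<bar>A\<bar> * \<sigma> / (\<sigma> - 1) + \<sigma> * transform_bound"
  show "bdd_above (sum (\<lambda>g. nrm g powr (- \<sigma>)) ` {F. F \<subseteq> UNIV \<and> finite F})"
  proof (rule bdd_aboveI2)
    fix F :: "'a set" assume "F \<in> {F. F \<subseteq> UNIV \<and> finite F}"
    then have F: "finite F" by auto
    define X where "X = max x0 (Max (insert 0 (nrm ` F)))"
    have X: "X \<ge> x0" by (simp add: X_def)
    have "F \<subseteq> elements_le X"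
    proof
      fix g assume "g \<in> F"
      then have "nrm g \<le> Max (insert 0 (nrm ` F))" using F by (intro Max_ge) auto
      then show "g \<in> elements_le X" by (auto simp: elements_le_def X_def)
    qed
    then have "sum (\<lambda>g. nrm g powr (- \<sigma>)) F \<le> sum (\<lambda>g. nrm g powr (- \<sigma>)) (elements_le X)"
      by (intro sum_mono2) auto
    also have "\<dots> = norm (zeta_partial X (of_real \<sigma>))"
    proof -
      have "zeta_partial X (of_real \<sigma>) = of_real (sum (\<lambda>g. nrm g powr (- \<sigma>)) (elements_le X))"
        unfolding zeta_partial_def of_real_sum using nrm_pos by (intro sum.cong) (simp_all add: cpow_neg_of_real)
      then have "norm (zeta_partial X (of_real \<sigma>)) = \<bar>sum (\<lambda>g. nrm g powr (- \<sigma>)) (elements_le X)\<bar>"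
        by (simp only: norm_of_real)
      then show ?thesis by (simp add: sum_nonneg)
    qed
    also have "\<dots> \<le> M"
      unfolding M_def by (rule norm_zeta_partial_real_le[OF X \<sigma>])
    finally show "sum (\<lambda>g. nrm g powr (- \<sigma>)) F \<le> M" .
  qed
qed auto

lemma summable_norm_cpow_neg:
  assumes "Re s > 1"
  shows "(\<lambda>g. norm (cpow_neg s (nrm g))) summable_on UNIV"
  using summable_nrm_powr[OF assms] nrm_pos by (simp add: norm_cpow_neg)

definition remainder_transform :: "complex \<Rightarrow> complex" where
  "remainder_transform s = (zeta s - of_real A * s / (s - 1)) / s"

lemma zeta_eq_pole_plus_transform:
  assumes "Re s > 1"
  shows "zeta s = of_real A * s / (s - 1) + s * remainder_transform s"
  using assms by (auto simp: remainder_transform_def)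

lemma count_N_mul_cpow_neg_tendsto_0:
  assumes "Re s > 1"
  shows "((\<lambda>X. of_real (count_N nrm X) * cpow_neg s X) \<longlongrightarrow> 0) at_top"
proof (rule Lim_null_comparison)
  show "\<forall>\<^sub>F X in at_top. norm (of_real (count_N nrm X) * cpow_neg s X) \<le> (\<bar>A\<bar> + K) * X powr (1 - Re s)"
    using eventually_ge_at_top[of x0]
  proof eventually_elim
    case (elim X)
    then have X: "X > 0" using x0_ge_1 by linarith
    have "norm (of_real (count_N nrm X) * cpow_neg s X) = count_N nrm X * X powr (- Re s)"
      using X count_N_nonneg[of X] by (simp add: norm_mult norm_cpow_neg)
    also have "\<dots> \<le> (\<bar>A\<bar> + K) * X * X powr (- Re s)"
      using count_N_le_linear[OF elim] by (intro mult_right_mono) auto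
    also have "\<dots> = (\<bar>A\<bar> + K) * X powr (1 - Re s)"
      using X by (simp add: powr_diff powr_minus divide_inverse)
    finally show ?case .
  qed
  show "((\<lambda>X. (\<bar>A\<bar> + K) * X powr (1 - Re s)) \<longlongrightarrow> 0) at_top"
    using assms by (intro tendsto_mult_right_zero tendsto_neg_powr filterlim_ident) auto
qed

lemma remainder_integral_tendsto:
  assumes s: "Re s > 1"
  shows "((\<lambda>X. remainder_integral X s) \<longlongrightarrow> remainder_transform s) at_top"
proof -
  have "s \<noteq> 0" "s \<noteq> 1" using s by auto
  have "((\<lambda>X. zeta_partial X s) \<longlongrightarrow> zeta s) at_top"
    unfolding zeta_partial_def zeta_def
    by (rule tendsto_sum_elements_le[OF abs_summable_summable[OF summable_norm_cpow_neg[OF s]]])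
  moreover have "((\<lambda>X. cpow_neg (s - 1) X) \<longlongrightarrow> 0) at_top"
  proof (rule Lim_null_comparison)
    show "\<forall>\<^sub>F X in at_top. norm (cpow_neg (s - 1) X) \<le> X powr (1 - Re s)"
      using eventually_gt_at_top[of 0] by eventually_elim (simp add: norm_cpow_neg)
    show "((\<lambda>X. X powr (1 - Re s)) \<longlongrightarrow> 0) at_top"
      using s by (intro tendsto_neg_powr filterlim_ident) auto
  qed
  ultimately have "((\<lambda>X. (zeta_partial X s - of_real (count_N nrm X) * cpow_neg s X
        - of_real A * s * ((1 - cpow_neg (s - 1) X) / (s - 1))) / s)
      \<longlongrightarrow> (zeta s - 0 - of_real A * s * ((1 - 0) / (s - 1))) / s) at_top"
    using \<open>s \<noteq> 0\<close> \<open>s \<noteq> 1\<close> by (intro tendsto_intros count_N_mul_cpow_neg_tendsto_0 s) auto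
  moreover have "\<forall>\<^sub>F X in at_top. (zeta_partial X s - of_real (count_N nrm X) * cpow_neg s X
        - of_real A * s * ((1 - cpow_neg (s - 1) X) / (s - 1))) / s = remainder_integral X s"
    using eventually_ge_at_top[of 1]
    by eventually_elim (use zeta_partial_eq s \<open>s \<noteq> 0\<close> in \<open>simp add: field_simps\<close>)
  ultimately show ?thesis
    by (simp add: remainder_transform_def tendsto_cong)
qed

lemma norm_remainder_transform_le:
  assumes "Re s > 1"
  shows "norm (remainder_transform s) \<le> transform_bound"
  by (rule tendsto_upperbound[OF tendsto_norm[OF remainder_integral_tendsto[OF assms]]])
     (use eventually_mono[OF eventually_ge_at_top[of x0]] norm_remainder_integral_le assms in auto)

lemma norm_remainder_transform_diff_le:
  assumes "Re s > 1" "0 \<le> d"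
  shows "norm (remainder_transform s - remainder_transform (s + of_real d)) \<le> d powr \<theta> * transform_bound"
proof (rule tendsto_upperbound)
  show "((\<lambda>X. norm (remainder_integral X s - remainder_integral X (s + of_real d)))
          \<longlongrightarrow> norm (remainder_transform s - remainder_transform (s + of_real d))) at_top"
    using assms by (intro tendsto_norm tendsto_diff remainder_integral_tendsto) auto
qed (use eventually_mono[OF eventually_ge_at_top[of x0]] norm_remainder_integral_diff_le assms in auto)

definition holder_const :: real where
  "holder_const = \<bar>A\<bar> + 3 * transform_bound + 1"

definition growth_const :: real where
  "growth_const = 2 * \<bar>A\<bar> + 2 * transform_bound + 1"

lemma holder_const_pos: "holder_const > 0"
  using transform_bound_nonneg by (simp add: holder_const_def)

lemma growth_const_ge_1: "growth_const \<ge> 1"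
  using transform_bound_nonneg by (simp add: growth_const_def)

lemma zeta_diff_eq:
  assumes "Re s > 1" "d \<ge> 0"
  shows "zeta (s + of_real d) - zeta s = of_real A * (- of_real d / ((s + of_real d - 1) * (s - 1)))
           + (of_real d * remainder_transform (s + of_real d)
              + s * (remainder_transform (s + of_real d) - remainder_transform s))"
proof -
  have Re: "Re (s + of_real d) > 1" "s - 1 \<noteq> 0" "s + of_real d - 1 \<noteq> 0"
    using assms by (auto simp: complex_eq_iff)
  have "zeta (s + of_real d) - zeta s = of_real A * ((s + of_real d) / (s + of_real d - 1) - s / (s - 1))
      + ((s + of_real d) * remainder_transform (s + of_real d) - s * remainder_transform s)"
    using zeta_eq_pole_plus_transform[OF Re(1)] zeta_eq_pole_plus_transform[OF assms(1)]
    by (simp add: algebra_simps)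
  also have "(s + of_real d) / (s + of_real d - 1) - s / (s - 1) = - of_real d / ((s + of_real d - 1) * (s - 1))"
    using Re by (simp add: field_simps)
  also have "(s + of_real d) * remainder_transform (s + of_real d) - s * remainder_transform s
      = of_real d * remainder_transform (s + of_real d) + s * (remainder_transform (s + of_real d) - remainder_transform s)"
    by (simp add: algebra_simps)
  finally show ?thesis .
qed

lemma zeta_holder:
  assumes t: "t \<ge> 2" and \<sigma>: "1 < \<sigma>'" "\<sigma>' \<le> \<sigma>" "\<sigma> \<le> 2"
  shows "norm (zeta (Complex \<sigma> t) - zeta (Complex \<sigma>' t)) \<le> holder_const * t * (\<sigma> - \<sigma>') powr \<theta>"
proof -
  define d where "d = \<sigma> - \<sigma>'"
  define s where "s = Complex \<sigma>' t"
  have d: "0 \<le> d" "d \<le> 1" using \<sigma> by (auto simp: d_def)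
  have s: "Re s > 1" "Complex \<sigma> t = s + of_real d"
    using \<sigma> by (auto simp: s_def d_def complex_eq_iff)
  have pole_term: "norm (of_real A * (- of_real d / ((s + of_real d - 1) * (s - 1)))) \<le> \<bar>A\<bar> * d"
    unfolding norm_mult norm_of_real
    using norm_pole_shift_diff_le[of s d] d t by (intro mult_left_mono) (auto simp: s_def)
  have "norm (of_real d * remainder_transform (s + of_real d)) \<le> d * transform_bound"
    using norm_remainder_transform_le[of "s + of_real d"] s d by (simp add: norm_mult mult_left_mono)
  also have "\<dots> \<le> d powr \<theta> * transform_bound"
    using d theta_pos theta_le_1 transform_bound_nonneg by (intro mult_right_mono le_powr_of_le_1) auto
  finally have transform_term: "norm (of_real d * remainder_transform (s + of_real d)) \<le> d powr \<theta> * transform_bound" .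
  have "norm s \<le> 2 * t"
    using cmod_le[of s] \<sigma> t by (simp add: s_def)
  then have diff_term: "norm (s * (remainder_transform (s + of_real d) - remainder_transform s))
      \<le> 2 * t * (d powr \<theta> * transform_bound)"
    using norm_remainder_transform_diff_le[OF s(1) d(1)] t
    by (simp add: norm_mult norm_minus_commute) (intro mult_mono, auto)
  have "norm (zeta (Complex \<sigma> t) - zeta (Complex \<sigma>' t))
      \<le> \<bar>A\<bar> * d + d powr \<theta> * transform_bound + 2 * t * (d powr \<theta> * transform_bound)"
    unfolding s(2) s_def[symmetric] zeta_diff_eq[OF s(1) d(1)]
    using pole_term transform_term diff_term
      norm_triangle_ineq[of "of_real A * (- of_real d / ((s + of_real d - 1) * (s - 1)))"]
      norm_triangle_ineq[of "of_real d * remainder_transform (s + of_real d)"]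
    by (smt (verit))
  also have "\<dots> \<le> holder_const * t * d powr \<theta>"
  proof -
    have "\<bar>A\<bar> * d \<le> \<bar>A\<bar> * t * d powr \<theta>"
      using d t theta_pos theta_le_1 le_powr_of_le_1[of d \<theta>]
      by (intro mult_mono) (auto intro: order.trans[OF _ mult_left_mono[of 1 t]])
    moreover have "d powr \<theta> * transform_bound \<le> t * d powr \<theta> * transform_bound"
      using t transform_bound_nonneg mult_right_mono[of 1 t "d powr \<theta>"] by (intro mult_right_mono) auto
    moreover have "0 \<le> t * d powr \<theta>" using t by simp
    ultimately show ?thesis
      by (simp add: holder_const_def algebra_simps)
  qed
  finally show ?thesis by (simp add: d_def)
qed

lemma zeta_boundary_limit:
  assumes "t \<ge> 2"
  obtains L where "((\<lambda>\<sigma>. zeta (Complex \<sigma> t)) \<longlongrightarrow> L) (at_right 1)"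
    and "\<And>\<sigma>. 1 < \<sigma> \<Longrightarrow> \<sigma> \<le> 2 \<Longrightarrow> norm (zeta (Complex \<sigma> t) - L) \<le> holder_const * t * (\<sigma> - 1) powr \<theta>"
  using holder_at_right_limit[of 1 2 "holder_const * t" \<theta> "\<lambda>\<sigma>. zeta (Complex \<sigma> t)"]
    zeta_holder[OF assms] holder_const_pos theta_pos assms
  by (auto simp: mult.assoc)

lemma norm_zeta_real_le:
  assumes "1 < \<sigma>" "\<sigma> \<le> 2"
  shows "norm (zeta (Complex \<sigma> 0)) \<le> growth_const / (\<sigma> - 1)"
proof -
  define s where "s = Complex \<sigma> 0"
  have s: "s = of_real \<sigma>" by (simp add: s_def complex_eq_iff)
  have Re: "Re s > 1" using assms by (simp add: s)
  have norm_s: "norm s = \<sigma>" "norm (s - 1) = \<sigma> - 1" using assms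
    by (simp_all add: s) (metis abs_of_pos diff_gt_0_iff_gt norm_of_real of_real_1 of_real_diff)
  have "norm (zeta s) \<le> norm (of_real A * s / (s - 1)) + norm (s * remainder_transform s)"
    unfolding zeta_eq_pole_plus_transform[OF Re] by (rule norm_triangle_ineq)
  also have "norm (of_real A * s / (s - 1)) = \<bar>A\<bar> * \<sigma> / (\<sigma> - 1)"
    by (simp add: norm_mult norm_divide norm_s)
  also have "\<dots> \<le> 2 * \<bar>A\<bar> / (\<sigma> - 1)"
    using assms mult_left_mono[of \<sigma> 2 "\<bar>A\<bar>"] by (intro divide_right_mono) (auto simp: mult.commute)
  also have "norm (s * remainder_transform s) \<le> \<sigma> * transform_bound"
    using norm_remainder_transform_le[OF Re] assms by (simp add: norm_mult norm_s mult_left_mono)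
  also have "\<sigma> * transform_bound \<le> (2 * transform_bound + 1) / (\<sigma> - 1)"
  proof -
    have "\<sigma> * transform_bound \<le> 2 * transform_bound"
      using assms transform_bound_nonneg by (intro mult_right_mono) auto
    also have "\<dots> \<le> (2 * transform_bound + 1) / 1"
      by simp
    also have "\<dots> \<le> (2 * transform_bound + 1) / (\<sigma> - 1)"
      using assms transform_bound_nonneg by (intro divide_left_mono) auto
    finally show ?thesis .
  qed
  finally show ?thesis
    by (simp add: s_def growth_const_def add_divide_distrib)
qed

lemma norm_zeta_le_linear:
  assumes "1 < \<sigma>" "\<sigma> \<le> 2" "\<bar>\<tau>\<bar> \<ge> 2"
  shows "norm (zeta (Complex \<sigma> \<tau>)) \<le> growth_const * \<bar>\<tau>\<bar>"
proof -
  define s where "s = Complex \<sigma> \<tau>"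
  have Re: "Re s > 1" using assms by (simp add: s_def)
  have norm_s: "norm s \<le> 2 * \<bar>\<tau>\<bar>" using cmod_le[of s] assms by (simp add: s_def)
  have norm_s_1: "norm (s - 1) \<ge> 1" using abs_Im_le_cmod[of "s - 1"] assms by (simp add: s_def)
  have "norm (zeta s) \<le> norm (of_real A * s / (s - 1)) + norm (s * remainder_transform s)"
    unfolding zeta_eq_pole_plus_transform[OF Re] by (rule norm_triangle_ineq)
  also have "norm (of_real A * s / (s - 1)) \<le> \<bar>A\<bar> * norm s"
  proof -
    have "norm s / norm (s - 1) \<le> norm s / 1" using norm_s_1 by (intro divide_left_mono) auto
    then have "\<bar>A\<bar> * (norm s / norm (s - 1)) \<le> \<bar>A\<bar> * norm s" by (intro mult_left_mono) auto
    then show ?thesis by (simp add: norm_mult norm_divide)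
  qed
  also have "norm (s * remainder_transform s) \<le> norm s * transform_bound"
    using norm_remainder_transform_le[OF Re] by (simp add: norm_mult mult_left_mono)
  also have "\<bar>A\<bar> * norm s + norm s * transform_bound = (\<bar>A\<bar> + transform_bound) * norm s"
    by (simp add: algebra_simps)
  also have "\<dots> \<le> (\<bar>A\<bar> + transform_bound) * (2 * \<bar>\<tau>\<bar>)"
    using norm_s transform_bound_nonneg by (intro mult_left_mono) auto
  also have "\<dots> \<le> growth_const * \<bar>\<tau>\<bar>"
    by (simp add: growth_const_def algebra_simps)
  finally show ?thesis by (simp add: s_def)
qed


lemma norm_zeta_shift_le:
  assumes t: "t \<ge> 2" and \<delta>: "0 < \<delta>" "\<delta> \<le> 1" and l: "l < n" "l' < n"
  shows "norm (zeta (Complex (1 + \<delta>) ((real l - real l') * t)))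
    \<le> (if l = l' then growth_const / \<delta>
        else if l = Suc l' \<or> l' = Suc l then norm (zeta (Complex (1 + \<delta>) t))
        else growth_const * real n * t)"
proof -
  have \<sigma>: "1 < 1 + \<delta>" "1 + \<delta> \<le> 2" using \<delta> by auto
  consider "l = l'" | "l = Suc l'" | "l' = Suc l" | "\<bar>real l - real l'\<bar> \<ge> 2"
    by linarith
  then show ?thesis
  proof cases
    case 1
    then show ?thesis using norm_zeta_real_le[OF \<sigma>] by simp
  next
    case 2
    then show ?thesis by simp
  next
    case 3
    then have "Complex (1 + \<delta>) ((real l - real l') * t) = cnj (Complex (1 + \<delta>) t)"
      by (simp add: complex_eq_iff)
    with 3 show ?thesis by (simp add: zeta_cnj)
  next
    case 4
    then have "\<bar>(real l - real l') * t\<bar> \<ge> 2"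
      using t mult_mono[of 2 "\<bar>real l - real l'\<bar>" 1 t] by (simp add: abs_mult)
    from norm_zeta_le_linear[OF \<sigma> this]
    have "norm (zeta (Complex (1 + \<delta>) ((real l - real l') * t))) \<le> growth_const * (\<bar>real l - real l'\<bar> * t)"
      using t by (simp add: abs_mult)
    also have "\<dots> \<le> growth_const * (real n * t)"
      using l t growth_const_ge_1 by (intro mult_left_mono mult_right_mono) auto
    finally show ?thesis using 4 by (auto simp: mult.assoc)
  qed
qed

text \<open>The product inequality over \<open>l, l' < n\<close>: the diagonal factors are real points near the pole,
  the two neighbouring diagonals are \<open>\<zeta>(1 + \<delta> \<plusminus> i t)\<close>, and the rest grow at most linearly in \<open>t\<close>.\<close>
lemma norm_zeta_lower_bound:
  assumes t: "t \<ge> 2" and n: "n \<ge> 2" and \<delta>: "0 < \<delta>" "\<delta> \<le> 1"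
  shows "norm (zeta (Complex (1 + \<delta>) t)) \<ge>
     (growth_const / \<delta>) powr (- pole_exponent n) * (growth_const * real n * t) powr (- growth_exponent n)"
proof -
  obtain m where n_eq: "n = Suc m" and m: "m \<ge> 1" using n by (cases n) auto
  have "1 \<le> (\<Prod>l<n. \<Prod>l'<n. norm (zeta (Complex (1 + \<delta>) ((real l - real l') * t))))"
    using \<delta> summable_nrm_powr[of "1 + \<delta>"] by (intro prod_norm_zeta_shifts_ge_1) auto
  also have "\<dots> \<le> (\<Prod>l<n. \<Prod>l'<n.
      if l = l' then growth_const / \<delta>
      else if l = Suc l' \<or> l' = Suc l then norm (zeta (Complex (1 + \<delta>) t))
      else growth_const * real n * t)"
    using norm_zeta_shift_le[OF t \<delta>] by (intro prod_mono conjI prod_nonneg) auto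
  also have "\<dots> = (growth_const / \<delta>) ^ Suc m * norm (zeta (Complex (1 + \<delta>) t)) ^ (2 * m)
      * (growth_const * real n * t) ^ (m * (m - 1))"
    unfolding n_eq by (rule prod_band_pattern)
  finally have "norm (zeta (Complex (1 + \<delta>) t)) \<ge> (growth_const / \<delta>) powr (- (real (Suc m) / (2 * real m)))
      * (growth_const * real n * t) powr (- ((real m - 1) / 2))"
    using growth_const_ge_1 \<delta> t n by (intro powr_lower_bound_of_prod_ge_1[OF m]) auto
  then show ?thesis
    using n_eq by (simp add: pole_exponent_def growth_exponent_def diff_divide_distrib)
qed

lemma norm_zeta_boundary_ge:
  assumes t: "t \<ge> 2" and n: "n \<ge> 2" and \<delta>: "0 < \<delta>" "\<delta> \<le> 1"
  shows "cmod (zeta_G_boundary nrm t) \<ge>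
           growth_const powr (- pole_exponent n) * (growth_const * real n) powr (- growth_exponent n)
             * \<delta> powr pole_exponent n * t powr (- growth_exponent n)
           - holder_const * t * \<delta> powr \<theta>"
proof -
  obtain L where L: "((\<lambda>\<sigma>. zeta (Complex \<sigma> t)) \<longlongrightarrow> L) (at_right 1)"
    and near: "\<And>\<sigma>. 1 < \<sigma> \<Longrightarrow> \<sigma> \<le> 2 \<Longrightarrow> norm (zeta (Complex \<sigma> t) - L) \<le> holder_const * t * (\<sigma> - 1) powr \<theta>"
    using zeta_boundary_limit[OF t] by blast
  have "zeta_G_boundary nrm t = L"
    unfolding zeta_G_boundary_def zeta_G_eq_zeta using L by (intro tendsto_Lim) auto
  moreover have "(growth_const / \<delta>) powr (- pole_exponent n) * (growth_const * real n * t) powr (- growth_exponent n)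
      = growth_const powr (- pole_exponent n) * (growth_const * real n) powr (- growth_exponent n)
          * \<delta> powr pole_exponent n * t powr (- growth_exponent n)"
    using growth_const_ge_1 \<delta> t n by (simp add: powr_divide powr_mult powr_minus field_simps)
  ultimately show ?thesis
    using norm_zeta_lower_bound[OF t n \<delta>] near[of "1 + \<delta>"] \<delta> norm_triangle_ineq2[of "zeta (Complex (1 + \<delta>) t)" L]
    by (simp add: norm_minus_commute)
qed

text \<open>Taking \<open>\<delta> = \<kappa> t\<^sup>-\<^sup>p\<close> with \<open>p = (\<beta> + 1) / (\<theta> - \<alpha>)\<close> and \<open>\<kappa>\<close> small makes the Hoelder error
  at most half of the main term.\<close>
lemma norm_zeta_boundary_lower_bound:
  assumes n: "n \<ge> 2" and \<alpha>: "pole_exponent n < \<theta>"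
  obtains c where "c > 0" "\<And>t. t \<ge> 2 \<Longrightarrow> cmod (zeta_G_boundary nrm t) \<ge> c * t powr (- boundary_exponent n \<theta>)"
proof -
  define \<alpha> where "\<alpha> = pole_exponent n"
  define \<beta> where "\<beta> = growth_exponent n"
  have \<beta>: "\<beta> \<ge> 0" using n by (simp add: \<beta>_def growth_exponent_def)
  have \<theta>\<alpha>: "\<theta> - \<alpha> > 0" using \<alpha> by (simp add: \<alpha>_def)
  define c1 where "c1 = growth_const powr (- \<alpha>) * (growth_const * real n) powr (- \<beta>)"
  have c1: "c1 > 0" using growth_const_ge_1 n by (simp add: c1_def)
  define p where "p = (\<beta> + 1) / (\<theta> - \<alpha>)"
  have p: "p > 0" using \<beta> \<theta>\<alpha> by (simp add: p_def)
  define \<kappa> where "\<kappa> = min 1 ((c1 / (2 * holder_const)) powr (1 / (\<theta> - \<alpha>)))"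
  have \<kappa>: "\<kappa> > 0" "\<kappa> \<le> 1" using c1 holder_const_pos by (auto simp: \<kappa>_def)
  have "\<kappa> powr (\<theta> - \<alpha>) \<le> ((c1 / (2 * holder_const)) powr (1 / (\<theta> - \<alpha>))) powr (\<theta> - \<alpha>)"
    using \<kappa> \<theta>\<alpha> by (intro powr_mono2) (auto simp: \<kappa>_def)
  also have "\<dots> = c1 / (2 * holder_const)"
    using \<theta>\<alpha> c1 holder_const_pos by (simp add: powr_powr)
  finally have \<kappa>_small: "\<kappa> powr (\<theta> - \<alpha>) \<le> c1 / (2 * holder_const)" .
  define c where "c = c1 / 2 * \<kappa> powr \<alpha>"
  show thesis
  proof
    show "c > 0" using c1 \<kappa> by (simp add: c_def)
    fix t :: real assume t: "t \<ge> 2"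
    define \<delta> where "\<delta> = \<kappa> * t powr (- p)"
    have "t powr (- p) \<le> 1" using t p powr_mono[of "- p" 0 t] by simp
    then have \<delta>: "0 < \<delta>" "\<delta> \<le> 1" using \<kappa> t by (auto simp: \<delta>_def intro: mult_le_one)
    have "holder_const * t * \<delta> powr \<theta> = holder_const * t * \<delta> powr (\<theta> - \<alpha>) * \<delta> powr \<alpha>"
      by (simp add: mult.assoc powr_add[symmetric])
    also have "\<delta> powr (\<theta> - \<alpha>) = \<kappa> powr (\<theta> - \<alpha>) * t powr (- (\<beta> + 1))"
      using \<kappa> t \<theta>\<alpha> by (simp add: \<delta>_def powr_mult powr_powr p_def)
    also have "holder_const * t * (\<kappa> powr (\<theta> - \<alpha>) * t powr (- (\<beta> + 1))) * \<delta> powr \<alpha>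
        \<le> holder_const * t * (c1 / (2 * holder_const) * t powr (- (\<beta> + 1))) * \<delta> powr \<alpha>"
      using \<kappa>_small holder_const_pos t by (intro mult_right_mono mult_left_mono) auto
    also have "\<dots> = c1 / 2 * t powr (- \<beta>) * \<delta> powr \<alpha>"
      using holder_const_pos t by (simp add: powr_add[symmetric] powr_minus field_simps)
    finally have "cmod (zeta_G_boundary nrm t) \<ge> c1 / 2 * \<delta> powr \<alpha> * t powr (- \<beta>)"
      using norm_zeta_boundary_ge[OF t n \<delta>] by (simp add: c1_def \<alpha>_def \<beta>_def algebra_simps)
    also have "c1 / 2 * \<delta> powr \<alpha> * t powr (- \<beta>) = c * t powr (- boundary_exponent n \<theta>)"
      using \<kappa> t by (simp add: c_def \<delta>_def p_def boundary_exponent_def \<alpha>_def[symmetric] \<beta>_def[symmetric]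
          powr_mult powr_powr powr_add[symmetric] algebra_simps)
    finally show "cmod (zeta_G_boundary nrm t) \<ge> c * t powr (- boundary_exponent n \<theta>)" .
  qed
qed

end

lemma bigo_x_over_ln_powr_imp_bound:
  fixes f :: "real \<Rightarrow> real"
  assumes "f \<in> O(\<lambda>x. x / ln x powr \<gamma>)"
  obtains K x0 where "K > 0" "x0 \<ge> exp 1" "\<And>x. x \<ge> x0 \<Longrightarrow> \<bar>f x\<bar> \<le> K * x / ln x powr \<gamma>"
proof -
  from assms obtain K x1 where "K > 0"
    and bound: "\<And>x. x \<ge> x1 \<Longrightarrow> \<bar>f x\<bar> \<le> K * \<bar>x / ln x powr \<gamma>\<bar>"
    by (elim landau_o.bigE) (auto simp: eventually_at_top_linorder)
  moreover have "\<bar>f x\<bar> \<le> K * x / ln x powr \<gamma>" if "x \<ge> max x1 (exp 1)" for x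
    using bound[of x] that exp_gt_zero[of 1] by simp
  ultimately show thesis
    using that[of K "max x1 (exp 1)"] by simp
qed

theorem mainTheorem10:
  fixes nrm :: "'a::comm_monoid_mult \<Rightarrow> real" and A \<gamma> :: real
  assumes "arith_semigroup nrm"
    and "3/2 < \<gamma>" and "\<gamma> \<le> 2"
    and "(\<lambda>x. count_N nrm x - A * x) \<in> O(\<lambda>x. x / (ln x) powr \<gamma>)"
  shows "\<exists>c>0. \<forall>t::real. t \<ge> 2 \<longrightarrow>
           cmod (zeta_G_boundary nrm t) \<ge> c * t powr (- 8 / (\<gamma> - 3/2)^2)"
proof -
  obtain K x0 where bound: "K > 0" "x0 \<ge> exp 1" "\<And>x. x \<ge> x0 \<Longrightarrow> \<bar>count_N nrm x - A * x\<bar> \<le> K * x / ln x powr \<gamma>"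
    using bigo_x_over_ln_powr_imp_bound[OF assms(4)] by blast
  define \<epsilon> where "\<epsilon> = \<gamma> - 3/2"
  have \<epsilon>: "0 < \<epsilon>" "\<epsilon> \<le> 1/2" using assms(2,3) by (auto simp: \<epsilon>_def)
  interpret arithmetic_semigroup_remainder nrm A
    using assms(1) by unfold_locales
  interpret arithmetic_semigroup_bounded_remainder nrm A K x0 \<gamma> "1/2 + \<epsilon>/2"
    using bound \<epsilon> by unfold_locales (auto simp: remainder_def \<epsilon>_def field_simps)
  obtain n where n: "n \<ge> 2" "pole_exponent n < 1/2 + \<epsilon>/2"
    and exponent: "boundary_exponent n (1/2 + \<epsilon>/2) \<le> 8 / \<epsilon>\<^sup>2"
    using boundary_exponent_le[OF \<epsilon>] by blast
  obtain c where "c > 0"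
    and c: "\<And>t. t \<ge> 2 \<Longrightarrow> cmod (zeta_G_boundary nrm t) \<ge> c * t powr (- boundary_exponent n (1/2 + \<epsilon>/2))"
    using norm_zeta_boundary_lower_bound[OF n] by blast
  have "c * t powr (- 8 / (\<gamma> - 3/2)^2) \<le> cmod (zeta_G_boundary nrm t)" if "t \<ge> 2" for t
    using exponent \<open>c > 0\<close> that
    by (intro order.trans[OF _ c[OF that]] mult_left_mono powr_mono) (auto simp: \<epsilon>_def)
  with \<open>c > 0\<close> show ?thesis by blast
qed

end
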